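(* Let $(\mathcal A,\phi)$ be a noncommutative probability space and $\mathcal F$ its free exchangeability system. For every noncrossing partition $\pi\in NC_n$ and all $X_1,\dots,X_n\in\mathcal A$, $$\phi^{\mathcal F}_\pi(X_1,\dots,X_n)=\prod_{B\in\pi}\phi\Big(\prod_{i\in B}X_i\Big),\qquad K^{\mathcal F}_\pi(X_1,\dots,X_n)=\prod_{B\in\pi}K^{\mathcal F}_{|B|}(X_i:i\in B),$$ where products and sequences within a block are taken in increasing order of the indices.
   Context: A noncommutative probability space is a pair $(\mathcal A,\phi)$ of a complex unital algebra $\mathcal A$ and a unital linear functional $\phi$. The free exchangeability system $\mathcal F$: $\mathcal U$ is the (unital, algebraic) free product of countably many copies $\mathcal A_k$, $k\in\mathbb N$, of $\mathcal A$, $\tilde\phi$ is the free product functional of copies of $\phi$ (characterized by $\tilde\phi(1)=1$, $\tilde\phi$ restricting to $\phi$ on each copy, and $\tilde\phi(a_1\cdots a_m)=0$ whenever $a_j\in\mathcal A_{k_j}$, $k_j\ne k_{j+1}$, $\tilde\phi(a_j)=0$), and $X\mapsto X^{(k)}$ is the inclusion of the $k$-th copy. For $X_1,\dots,X_n\in\mathcal A$ and a partition $\pi$ of $[n]$, $\phi^{\mathcal F}_\pi(X_1,\dots,X_n)=\tilde\phi(X_1^{(i_1)}\cdots X_n^{(i_n)})$ for any indices $i_1,\dots,i_n$ with $i_j=i_l\iff j,l$ in the same block of $\pi$. $K^{\mathcal F}_\pi=\sum_{\sigma\le\pi}\phi^{\mathcal F}_\sigma\,\mu(\sigma,\pi)$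 with $\mu$ the Möbius function of the set-partition lattice $\Pi_n$ under refinement, and $K^{\mathcal F}_m(Y_1,\dots,Y_m)=K^{\mathcal F}_{\hat1_m}(Y_1,\dots,Y_m)$ for the one-block partition. A partition $\pi$ is noncrossing if there are no $i<j<k<l$ with $i,k$ in one block and $j,l$ in a different block; $NC_n$ is the set of noncrossing partitions of $[n]$. *)

theory Defs
  imports Complex_Main "HOL-Library.Disjoint_Sets"
begin

definition complex_unital_algebra :: "(complex \<Rightarrow> 'a::ring_1 \<Rightarrow> 'a) \<Rightarrow> bool" where
  "complex_unital_algebra sm \<longleftrightarrow> module sm \<and>
     (\<forall>c x y. sm c (x * y) = sm c x * y \<and> sm c (x * y) = x * sm c y)"

definition unital_linear_functional ::
    "(complex \<Rightarrow> 'a::ring_1 \<Rightarrow> 'a) \<Rightarrow> ('a \<Rightarrow> complex) \<Rightarrow> bool" where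
  "unital_linear_functional sm f \<longleftrightarrow>
     (\<forall>x y. f (x + y) = f x + f y) \<and> (\<forall>c x. f (sm c x) = c * f x) \<and> f 1 = 1"

definition nc_prob_space :: "(complex \<Rightarrow> 'a::ring_1 \<Rightarrow> 'a) \<Rightarrow> ('a \<Rightarrow> complex) \<Rightarrow> bool" where
  "nc_prob_space sm \<phi> \<longleftrightarrow> complex_unital_algebra sm \<and> unital_linear_functional sm \<phi>"

definition unital_alg_hom ::
    "(complex \<Rightarrow> 'a::ring_1 \<Rightarrow> 'a) \<Rightarrow> (complex \<Rightarrow> 'u::ring_1 \<Rightarrow> 'u) \<Rightarrow> ('a \<Rightarrow> 'u) \<Rightarrow> bool" where
  "unital_alg_hom smA smU h \<longleftrightarrow>
     (\<forall>x y. h (x + y) = h x + h y) \<and> (\<forall>x y. h (x * y) = h x * h y) \<and> h 1 = 1 \<and>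
     (\<forall>c x. h (smA c x) = smU c (h x))"

text \<open>(U, smU, \<iota>, \<psi>) is a free exchangeability system of (A, \<phi>): U is a complex unital
algebra, \<iota> k is the (unital algebra homomorphic) inclusion of the k-th copy of A, \<psi> is a
unital linear functional restricting to \<phi> on every copy, and \<psi> satisfies the
freeness rule characterizing the free product functional: \<psi>(a_1 ... a_m) = 0 whenever
a_j lies in copy k_j, consecutive copies are different and \<phi>(a_j) = 0.\<close>
definition free_exch_system ::
  "(complex \<Rightarrow> 'a::ring_1 \<Rightarrow> 'a) \<Rightarrow> ('a \<Rightarrow> complex) \<Rightarrow>
   (complex \<Rightarrow> 'u::ring_1 \<Rightarrow> 'u) \<Rightarrow> (nat \<Rightarrow> 'a \<Rightarrow> 'u) \<Rightarrow> ('u \<Rightarrow> complex) \<Rightarrow> bool" where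
  "free_exch_system smA \<phi> smU \<iota> \<psi> \<longleftrightarrow>
     complex_unital_algebra smU \<and> unital_linear_functional smU \<psi> \<and>
     (\<forall>k. unital_alg_hom smA smU (\<iota> k)) \<and>
     (\<forall>k a. \<psi> (\<iota> k a) = \<phi> a) \<and>
     (\<forall>ws :: (nat \<times> 'a) list. ws \<noteq> [] \<longrightarrow> successively (\<lambda>p q. fst p \<noteq> fst q) ws \<longrightarrow>
        (\<forall>(k, a) \<in> set ws. \<phi> a = 0) \<longrightarrow>
        \<psi> (prod_list (map (\<lambda>(k, a). \<iota> k a) ws)) = 0)"

definition set_partitions :: "nat \<Rightarrow> nat set set set" where
  "set_partitions n = {\<pi>. partition_on {1..n} \<pi>}"

definition refines :: "nat set set \<Rightarrow> nat set set \<Rightarrow> bool" where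
  "refines \<sigma> \<pi> \<longleftrightarrow> (\<forall>b\<in>\<sigma>. \<exists>c\<in>\<pi>. b \<subseteq> c)"

definition noncrossing :: "nat set set \<Rightarrow> bool" where
  "noncrossing \<pi> \<longleftrightarrow> \<not> (\<exists>B\<in>\<pi>. \<exists>B'\<in>\<pi>. B \<noteq> B' \<and>
      (\<exists>i j k l. i < j \<and> j < k \<and> k < l \<and> i \<in> B \<and> k \<in> B \<and> j \<in> B' \<and> l \<in> B'))"

definition NC :: "nat \<Rightarrow> nat set set set" where
  "NC n = {\<pi> \<in> set_partitions n. noncrossing \<pi>}"

text \<open>The recursion is run with a fuel parameter; fuel n+1 exceeds the length of every
  chain in \<Pi>_n, so mobius n is the genuine Moebius function on \<Pi>_n.\<close>
fun mobius_aux :: "nat \<Rightarrow> nat \<Rightarrow> nat set set \<Rightarrow> nat set set \<Rightarrow> int" where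
  "mobius_aux n 0 \<sigma> \<pi> = 0"
| "mobius_aux n (Suc f) \<sigma> \<pi> =
     (if \<sigma> = \<pi> then 1
      else if refines \<sigma> \<pi> then
        - (\<Sum>\<tau>\<in>{\<tau> \<in> set_partitions n. refines \<sigma> \<tau> \<and> refines \<tau> \<pi> \<and> \<tau> \<noteq> \<pi>}.
              mobius_aux n f \<sigma> \<tau>)
      else 0)"

definition mobius :: "nat \<Rightarrow> nat set set \<Rightarrow> nat set set \<Rightarrow> int" where
  "mobius n \<sigma> \<pi> = mobius_aux n (Suc n) \<sigma> \<pi>"

text \<open>Canonical index choice: i_j = least element of the block of \<pi> containing j
  (so i_j = i_l iff j, l lie in the same block).\<close>
definition block_index :: "nat set set \<Rightarrow> nat \<Rightarrow> nat" where
  "block_index \<pi> j = (LEAST i. \<exists>B\<in>\<pi>. i \<in> B \<and> j \<in> B)"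

definition phiF :: "(nat \<Rightarrow> 'a \<Rightarrow> 'u::ring_1) \<Rightarrow> ('u \<Rightarrow> complex) \<Rightarrow>
    nat \<Rightarrow> nat set set \<Rightarrow> (nat \<Rightarrow> 'a) \<Rightarrow> complex" where
  "phiF \<iota> \<psi> n \<pi> X = \<psi> (prod_list (map (\<lambda>j. \<iota> (block_index \<pi> j) (X j)) [1..<n+1]))"

definition KF :: "(nat \<Rightarrow> 'a \<Rightarrow> 'u::ring_1) \<Rightarrow> ('u \<Rightarrow> complex) \<Rightarrow>
    nat \<Rightarrow> nat set set \<Rightarrow> (nat \<Rightarrow> 'a) \<Rightarrow> complex" where
  "KF \<iota> \<psi> n \<pi> X =
     (\<Sum>\<sigma>\<in>{\<sigma> \<in> set_partitions n. refines \<sigma> \<pi>}. phiF \<iota> \<psi> n \<sigma> X * of_int (mobius n \<sigma> \<pi>))"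

definition KFm :: "(nat \<Rightarrow> 'a \<Rightarrow> 'u::ring_1) \<Rightarrow> ('u \<Rightarrow> complex) \<Rightarrow>
    nat \<Rightarrow> (nat \<Rightarrow> 'a) \<Rightarrow> complex" where
  "KFm \<iota> \<psi> m Y = KF \<iota> \<psi> m {{1..m}} Y"

definition ord_prod :: "(nat \<Rightarrow> 'a::ring_1) \<Rightarrow> nat set \<Rightarrow> 'a" where
  "ord_prod X B = prod_list (map X (sorted_list_of_set B))"

definition restrict_seq :: "(nat \<Rightarrow> 'a) \<Rightarrow> nat set \<Rightarrow> nat \<Rightarrow> 'a" where
  "restrict_seq X B j = X (sorted_list_of_set B ! (j - 1))"

end

theory Submission
  imports Defs
begin

text \<open>The free product functional kills alternating products of centred elements. Merging
  neighbouring letters from the same copy and splitting every letter into its mean and a centred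
  part reduces arbitrary words to such products; in particular a subword whose copies occur
  nowhere else in a word factors out of its moment. A noncrossing partition always has a block
  that is an interval, so by removing that block and inducting, the moment indexed by a
  noncrossing partition \<pi>, or by any refinement of \<pi>, factors over the blocks of \<pi>.

  For the cumulants, the interval [\<sigma>, \<pi>] of the partition lattice is the product, over
  the blocks B of \<pi>, of the lattices of partitions of B, and the Moebius function is
  multiplicative along this decomposition. Summing blockwise, each factor is the cumulant of the
  block B once B is transported to {1..card B} along its increasing enumeration.\<close>

section \<open>Set partitions and noncrossing partitions\<close>

lemma partition_on_block_eq:
  assumes "partition_on A \<pi>" "B \<in> \<pi>" "C \<in> \<pi>" "x \<in> B" "x \<in> C"
  shows "B = C"
proof (rule ccontr)
  assume "B \<noteq> C"
  with disjointD[OF partition_onD2[OF assms(1)] assms(2,3)] have "B \<inter> C = {}" .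
  with assms(4,5) show False
    by blast
qed

lemma partition_on_block:
  assumes "partition_on A \<pi>" "B \<in> \<pi>"
  shows "B \<subseteq> A" "B \<noteq> {}"
  using assms by (auto simp: partition_on_def)

lemma partition_on_block_finite:
  assumes "partition_on A \<pi>" "finite A" "B \<in> \<pi>"
  shows "finite B"
  using partition_on_block(1)[OF assms(1,3)] assms(2) by (rule finite_subset)

lemma partition_on_Diff_block:
  assumes "partition_on A \<pi>" "B \<in> \<pi>"
  shows "partition_on (A - B) (\<pi> - {B})"
proof -
  have "disjnt B (\<Union>(\<pi> - {B}))"
    using disjointD[OF partition_onD2[OF assms(1)] assms(2)] unfolding disjnt_def by blast
  moreover have "partition_on A (insert B (\<pi> - {B}))"
    using assms by (simp add: insert_absorb)
  ultimately show ?thesis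
    using partition_on_insert[of B "\<pi> - {B}" A] by blast
qed

lemma noncrossingD:
  assumes "noncrossing \<pi>" "B \<in> \<pi>" "B' \<in> \<pi>" "B \<noteq> B'"
    and "i < j" "j < k" "k < l" "i \<in> B" "k \<in> B" "j \<in> B'" "l \<in> B'"
  shows False
proof -
  have "B \<noteq> B' \<and> (\<exists>i j k l. i < j \<and> j < k \<and> k < l \<and> i \<in> B \<and> k \<in> B \<and> j \<in> B' \<and> l \<in> B')"
    using assms(4-11) by blast
  then have "\<exists>B\<in>\<pi>. \<exists>B'\<in>\<pi>. B \<noteq> B' \<and>
      (\<exists>i j k l. i < j \<and> j < k \<and> k < l \<and> i \<in> B \<and> k \<in> B \<and> j \<in> B' \<and> l \<in> B')"
    using assms(2,3) by (intro bexI)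
  with assms(1) show False
    unfolding noncrossing_def by (rule notE)
qed

lemma noncrossing_subset:
  assumes "noncrossing \<pi>" "\<pi>' \<subseteq> \<pi>"
  shows "noncrossing \<pi>'"
  unfolding noncrossing_def
proof (intro notI, elim bexE exE conjE)
  fix B B' i j k l
  assume "B \<in> \<pi>'" "B' \<in> \<pi>'" and crossing: "B \<noteq> B'" "i < j" "j < k" "k < l" "i \<in> B" "k \<in> B" "j \<in> B'" "l \<in> B'"
  then have "B \<in> \<pi>" "B' \<in> \<pi>"
    using assms(2) by auto
  from noncrossingD[OF assms(1) this crossing] show False .
qed

lemma partition_on_Min_Max:
  assumes "finite A" "partition_on A \<pi>" "C \<in> \<pi>"
  shows "Min C \<in> C" "Max C \<in> C" "Min C \<le> Max C"
proof -
  have "finite C" "C \<noteq> {}"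
    using partition_on_block_finite[OF assms(2,1,3)] partition_on_block(2)[OF assms(2,3)] .
  then show "Min C \<in> C" "Max C \<in> C" "Min C \<le> Max C"
    by simp_all
qed

lemma noncrossing_surrounded_block:
  assumes "finite A" "partition_on A \<pi>" "noncrossing \<pi>" "B \<in> \<pi>" "C \<in> \<pi>" "C \<noteq> B"
    and "a \<in> C" "Min B < a" "a < Max B"
  shows "Min B < Min C" "Max C < Max B"
proof -
  note B = partition_on_Min_Max[OF assms(1,2,4)]
  have inside: "Min B < c \<and> c < Max B" if "c \<in> C" for c
  proof -
    have "c \<notin> B"
      using partition_on_block_eq[OF assms(2,5,4) that] assms(6) by blast
    then have "c \<noteq> Min B" "c \<noteq> Max B"
      using B(1,2) by auto
    moreover have "\<not> c < Min B"
    proof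
      assume "c < Min B"
      from noncrossingD[OF assms(3,5,4,6) this assms(8,9) that assms(7) B(1,2)]
      show False .
    qed
    moreover have "\<not> Max B < c"
    proof
      assume "Max B < c"
      from noncrossingD[OF assms(3,4,5) assms(6)[symmetric] assms(8,9) this B(1,2) assms(7) that]
      show False .
    qed
    ultimately show ?thesis
      by linarith
  qed
  then show "Min B < Min C" "Max C < Max B"
    using partition_on_Min_Max(1,2)[OF assms(1,2,5)] by blast+
qed

text \<open>A block of minimal diameter is an interval: by noncrossing, any other block
  reaching inside it would lie strictly inside it.\<close>

lemma noncrossing_interval_block:
  assumes "finite A" "partition_on A \<pi>" "noncrossing \<pi>" "\<pi> \<noteq> {}"
  obtains B where "B \<in> \<pi>" "\<And>a. a \<in> A \<Longrightarrow> Min B < a \<Longrightarrow> a < Max B \<Longrightarrow> a \<in> B"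
proof -
  obtain B0 where "B0 \<in> \<pi>"
    using assms(4) by blast
  then obtain B where B: "B \<in> \<pi>" and minimal: "\<And>C. C \<in> \<pi> \<Longrightarrow> Max B - Min B \<le> Max C - Min C"
    using ex_has_least_nat[of "\<lambda>B. B \<in> \<pi>" B0 "\<lambda>B. Max B - Min B"] by blast
  have "a \<in> B" if a: "a \<in> A" "Min B < a" "a < Max B" for a
  proof (rule ccontr)
    assume "a \<notin> B"
    obtain C where C: "C \<in> \<pi>" "a \<in> C"
      using a(1) partition_onD1[OF assms(2)] by blast
    with \<open>a \<notin> B\<close> have "C \<noteq> B"
      by blast
    have "Min B < Min C" "Max C < Max B"
      using noncrossing_surrounded_block[OF assms(1-3) B C(1) \<open>C \<noteq> B\<close> C(2) a(2,3)] .
    then show False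
      using minimal[OF C(1)] partition_on_Min_Max(3)[OF assms(1,2) C(1)] by linarith
  qed
  with B show thesis
    by (rule that)
qed

lemma sorted_list_of_set_atLeast1AtMost: "sorted_list_of_set {1..n} = [1..<n + 1]"
  using sorted_list_of_set_range[of 1 "Suc n"] by (simp add: atLeastLessThanSuc_atLeastAtMost)

lemma sorted_list_of_set_Un_less:
  assumes "finite L" "finite M" "\<And>x y. x \<in> L \<Longrightarrow> y \<in> M \<Longrightarrow> x < y"
  shows "sorted_list_of_set (L \<union> M) = sorted_list_of_set L @ sorted_list_of_set (M :: 'a::linorder set)"
proof (rule sorted_distinct_set_unique)
  show "sorted (sorted_list_of_set L @ sorted_list_of_set M)"
    using assms by (auto simp: sorted_append less_imp_le)
  show "distinct (sorted_list_of_set L @ sorted_list_of_set M)"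
    using assms by fastforce
qed (use assms in auto)

lemma sorted_list_of_set_interval_split:
  fixes A B :: "'a::linorder set"
  assumes "finite A" "B \<subseteq> A" "B \<noteq> {}"
    and interval: "\<And>a. a \<in> A \<Longrightarrow> Min B < a \<Longrightarrow> a < Max B \<Longrightarrow> a \<in> B"
  defines "L \<equiv> {a \<in> A. a < Min B}" and "R \<equiv> {a \<in> A. Max B < a}"
  shows "sorted_list_of_set A = sorted_list_of_set L @ sorted_list_of_set B @ sorted_list_of_set R"
    and "sorted_list_of_set (A - B) = sorted_list_of_set L @ sorted_list_of_set R"
proof -
  have fin: "finite B" "finite L" "finite R"
    using assms(1,2) finite_subset unfolding L_def R_def by auto
  have "A = L \<union> (B \<union> R)"
  proof -
    have "a \<in> L \<union> (B \<union> R)" if "a \<in> A" for a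
    proof -
      consider "a < Min B" | "Max B < a" | "a = Min B" | "a = Max B" | "Min B < a" "a < Max B"
        using linorder_less_linear[of a "Min B"] linorder_less_linear[of a "Max B"] by blast
      then show ?thesis
        using that interval[OF that] Min_in[OF fin(1) assms(3)] Max_in[OF fin(1) assms(3)]
        unfolding L_def R_def by cases auto
    qed
    then show ?thesis
      using assms(2) unfolding L_def R_def by auto
  qed
  have LB: "x < y" if "x \<in> L" "y \<in> B" for x y
    using that fin(1) less_le_trans[of x "Min B" y] unfolding L_def by simp
  have BR: "x < y" if "x \<in> B" "y \<in> R" for x y
    using that fin(1) le_less_trans[of x "Max B" y] unfolding R_def by simp
  have LR: "x < y" if "x \<in> L" "y \<in> R" for x y
    using LB BR that Min_in[OF fin(1) assms(3)] by (meson order.strict_trans)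
  have "sorted_list_of_set (L \<union> (B \<union> R)) = sorted_list_of_set L @ sorted_list_of_set (B \<union> R)"
    by (rule sorted_list_of_set_Un_less) (use fin LB LR in auto)
  also have "sorted_list_of_set (B \<union> R) = sorted_list_of_set B @ sorted_list_of_set R"
    by (rule sorted_list_of_set_Un_less) (use fin BR in auto)
  finally show "sorted_list_of_set A = sorted_list_of_set L @ sorted_list_of_set B @ sorted_list_of_set R"
    using \<open>A = L \<union> (B \<union> R)\<close> by simp
  have "A - B = L \<union> R"
    using \<open>A = L \<union> (B \<union> R)\<close> LB BR by blast
  then show "sorted_list_of_set (A - B) = sorted_list_of_set L @ sorted_list_of_set R"
    using sorted_list_of_set_Un_less[of L R] fin LR by simp
qed

section \<open>Intervals in the lattice of set partitions\<close>

lemma refinesI: "(\<And>C. C \<in> \<sigma> \<Longrightarrow> \<exists>D\<in>\<tau>. C \<subseteq> D) \<Longrightarrow> refines \<sigma> \<tau>"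
  by (simp add: Defs.refines_def)

lemma refinesE:
  assumes "refines \<sigma> \<tau>" "C \<in> \<sigma>"
  obtains D where "D \<in> \<tau>" "C \<subseteq> D"
  using assms by (auto simp: Defs.refines_def)

lemma refines_reflexive: "refines \<sigma> \<sigma>"
  by (auto simp: Defs.refines_def)

lemma refines_single_block: "partition_on A \<sigma> \<Longrightarrow> refines \<sigma> {A}"
  by (auto simp: Defs.refines_def partition_on_def)

lemma singletons_refines: "partition_on A \<sigma> \<Longrightarrow> refines ((\<lambda>x. {x}) ` A) \<sigma>"
  by (auto simp: Defs.refines_def partition_on_def)

lemma refines_block_unique:
  assumes "partition_on A \<tau>" "C \<noteq> {}" "D \<in> \<tau>" "C \<subseteq> D" "D' \<in> \<tau>" "C \<subseteq> D'"
  shows "D' = D"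
proof -
  obtain x where "x \<in> C"
    using assms(2) by blast
  then show ?thesis
    using partition_on_block_eq[OF assms(1,5,3)] assms(4,6) by blast
qed

definition partitions_between :: "nat set \<Rightarrow> nat set set \<Rightarrow> nat set set \<Rightarrow> nat set set set" where
  "partitions_between A \<sigma> \<pi> = {\<tau>. partition_on A \<tau> \<and> refines \<sigma> \<tau> \<and> refines \<tau> \<pi>}"

lemma finite_partitions_between: "finite A \<Longrightarrow> finite (partitions_between A \<sigma> \<pi>)"
  unfolding partitions_between_def
  by (rule finite_subset[OF _ finitely_many_partition_on]) auto

definition blocks_in :: "'a set set \<Rightarrow> 'a set \<Rightarrow> 'a set set" where
  "blocks_in \<tau> B = {C \<in> \<tau>. C \<subseteq> B}"

lemma partition_on_blocks_in:
  assumes "partition_on A \<tau>" "partition_on A \<pi>" "refines \<tau> \<pi>" "B \<in> \<pi>"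
  shows "partition_on B (blocks_in \<tau> B)"
proof -
  have "Disjoint_Sets.refines A \<tau> \<pi>"
    using assms(1-3) by (simp add: Disjoint_Sets.refines_def Defs.refines_def)
  then show ?thesis
    unfolding blocks_in_def using assms(4) by (rule refines_obtains_subset)
qed

lemma blocks_in_self:
  assumes "partition_on A \<pi>" "B \<in> \<pi>"
  shows "blocks_in \<pi> B = {B}"
proof -
  have "B = C" if "C \<in> \<pi>" "C \<subseteq> B" for C
    using refines_block_unique[OF assms(1) partition_on_block(2)[OF assms(1) that(1)] that(1) order.refl
        assms(2) that(2)] .
  then show ?thesis
    using assms(2) by (auto simp: blocks_in_def)
qed

lemma blocks_in_blocks_in: "C \<subseteq> B \<Longrightarrow> blocks_in (blocks_in \<sigma> B) C = blocks_in \<sigma> C"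
  by (auto simp: blocks_in_def)

lemma UN_blocks_in:
  assumes "refines \<tau> \<pi>"
  shows "(\<Union>B\<in>\<pi>. blocks_in \<tau> B) = \<tau>"
proof
  show "\<tau> \<subseteq> (\<Union>B\<in>\<pi>. blocks_in \<tau> B)"
  proof
    fix C
    assume "C \<in> \<tau>"
    with assms obtain D where "D \<in> \<pi>" "C \<subseteq> D"
      by (rule refinesE)
    with \<open>C \<in> \<tau>\<close> show "C \<in> (\<Union>B\<in>\<pi>. blocks_in \<tau> B)"
      by (auto simp: blocks_in_def)
  qed
qed (auto simp: blocks_in_def)

lemma blocks_in_disjoint:
  assumes "partition_on A \<tau>" "partition_on A \<pi>" "B \<in> \<pi>" "B' \<in> \<pi>" "B \<noteq> B'"
  shows "blocks_in \<tau> B \<inter> blocks_in \<tau> B' = {}"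
proof -
  have "B \<inter> B' = {}"
    using disjointD[OF partition_onD2[OF assms(2)] assms(3-5)] .
  show ?thesis
  proof (rule ccontr)
    assume "blocks_in \<tau> B \<inter> blocks_in \<tau> B' \<noteq> {}"
    then obtain C where "C \<in> \<tau>" "C \<subseteq> B" "C \<subseteq> B'"
      by (auto simp: blocks_in_def)
    with \<open>B \<inter> B' = {}\<close> have "{} \<in> \<tau>"
      by (metis subset_empty le_inf_iff)
    with partition_onD3[OF assms(1)] show False
      by simp
  qed
qed

lemma refines_blocks_in:
  assumes "partition_on A \<sigma>" "partition_on A \<pi>" "refines \<sigma> \<tau>" "refines \<tau> \<pi>" "B \<in> \<pi>"
  shows "refines (blocks_in \<sigma> B) (blocks_in \<tau> B)"
proof (rule refinesI)
  fix C
  assume "C \<in> blocks_in \<sigma> B"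
  then have C: "C \<in> \<sigma>" "C \<subseteq> B"
    by (auto simp: blocks_in_def)
  obtain E where E: "E \<in> \<tau>" "C \<subseteq> E"
    using assms(3) C(1) by (rule refinesE)
  obtain D where D: "D \<in> \<pi>" "E \<subseteq> D"
    using assms(4) E(1) by (rule refinesE)
  have "D = B"
    using refines_block_unique[OF assms(2) partition_on_block(2)[OF assms(1) C(1)] assms(5) C(2) D(1)]
      D(2) E(2) by blast
  then show "\<exists>D\<in>blocks_in \<tau> B. C \<subseteq> D"
    using E D by (auto simp: blocks_in_def)
qed

lemma prod_blocks_in:
  assumes "partition_on A \<tau>" "partition_on A \<pi>" "refines \<tau> \<pi>" "finite A"
  shows "(\<Prod>C\<in>\<tau>. f C) = (\<Prod>B\<in>\<pi>. \<Prod>C\<in>blocks_in \<tau> B. f C)"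
proof -
  have "finite (blocks_in \<tau> B)" for B
    using finite_elements[OF assms(4,1)] by (simp add: blocks_in_def)
  then have "(\<Prod>C\<in>(\<Union>B\<in>\<pi>. blocks_in \<tau> B). f C) = (\<Prod>B\<in>\<pi>. \<Prod>C\<in>blocks_in \<tau> B. f C)"
    using finite_elements[OF assms(4,2)] blocks_in_disjoint[OF assms(1,2)] by (intro prod.UNION_disjoint) auto
  then show ?thesis
    using UN_blocks_in[OF assms(3)] by simp
qed

lemma card_blocks_in_sum:
  assumes "partition_on A \<tau>" "partition_on A \<pi>" "refines \<tau> \<pi>" "finite A"
  shows "card \<tau> = (\<Sum>B\<in>\<pi>. card (blocks_in \<tau> B))"
proof -
  have "finite (blocks_in \<tau> B)" for B
    using finite_elements[OF assms(4,1)] by (simp add: blocks_in_def)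
  then have "card (\<Union>B\<in>\<pi>. blocks_in \<tau> B) = (\<Sum>B\<in>\<pi>. card (blocks_in \<tau> B))"
    using finite_elements[OF assms(4,2)] blocks_in_disjoint[OF assms(1,2)] by (intro card_UN_disjoint) auto
  then show ?thesis
    using UN_blocks_in[OF assms(3)] by simp
qed

lemma card_partition_on_pos:
  assumes "finite B" "partition_on B \<rho>" "B \<noteq> {}"
  shows "0 < card \<rho>"
  using assms finite_elements[OF assms(1,2)] partition_onD1[OF assms(2)] by (auto simp: card_gt_0_iff)

lemma card_partition_on_ge_2:
  assumes "finite B" "partition_on B \<rho>" "\<rho> \<noteq> {B}" "B \<noteq> {}"
  shows "2 \<le> card \<rho>"
proof -
  have "card \<rho> \<noteq> 1"
  proof
    assume "card \<rho> = 1"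
    then obtain D where "\<rho> = {D}"
      by (auto simp: card_Suc_eq)
    moreover have "\<Union>\<rho> = B"
      using partition_onD1[OF assms(2)] by simp
    ultimately show False
      using assms(3) by simp
  qed
  then show ?thesis
    using card_partition_on_pos[OF assms(1,2,4)] by linarith
qed

lemma refines_neqE:
  assumes "refines \<sigma> \<pi>" "\<sigma> \<noteq> \<pi>"
  obtains B where "B \<in> \<pi>" "blocks_in \<sigma> B \<noteq> {B}"
proof -
  have "\<exists>B\<in>\<pi>. blocks_in \<sigma> B \<noteq> {B}"
  proof (rule ccontr)
    assume "\<not> (\<exists>B\<in>\<pi>. blocks_in \<sigma> B \<noteq> {B})"
    then have "\<sigma> = (\<Union>B\<in>\<pi>. {B})"
      using UN_blocks_in[OF assms(1)] by simp
    with assms(2) show False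
      by simp
  qed
  with that show thesis
    by blast
qed

lemma refines_card_le:
  assumes "finite A" "partition_on A \<sigma>" "partition_on A \<tau>" "refines \<sigma> \<tau>"
  shows "card \<tau> \<le> card \<sigma>"
    and "\<sigma> \<noteq> \<tau> \<Longrightarrow> card \<tau> < card \<sigma>"
proof -
  have blocks: "finite B" "partition_on B (blocks_in \<sigma> B)" "B \<noteq> {}" if "B \<in> \<tau>" for B
    using partition_on_block_finite[OF assms(3,1) that] partition_on_blocks_in[OF assms(2,3,4) that]
      partition_on_block(2)[OF assms(3) that] .
  have sum: "card \<sigma> = (\<Sum>B\<in>\<tau>. card (blocks_in \<sigma> B))"
    using assms(2,3,4,1) by (rule card_blocks_in_sum)
  have "card \<tau> = (\<Sum>B\<in>\<tau>. 1)"
    by simp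
  also have "\<dots> \<le> (\<Sum>B\<in>\<tau>. card (blocks_in \<sigma> B))"
    using card_partition_on_pos[OF blocks] by (intro sum_mono) (simp add: Suc_le_eq)
  finally show "card \<tau> \<le> card \<sigma>"
    using sum by simp
  assume "\<sigma> \<noteq> \<tau>"
  then obtain B0 where B0: "B0 \<in> \<tau>" "blocks_in \<sigma> B0 \<noteq> {B0}"
    using refines_neqE[OF assms(4)] by blast
  have "(\<Sum>B\<in>\<tau>. 1) < (\<Sum>B\<in>\<tau>. card (blocks_in \<sigma> B))"
  proof (rule sum_strict_mono_ex1)
    show "finite \<tau>"
      using assms(1,3) by (rule finite_elements)
    show "\<forall>B\<in>\<tau>. 1 \<le> card (blocks_in \<sigma> B)"
      using card_partition_on_pos[OF blocks] by (simp add: Suc_le_eq)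
    have "2 \<le> card (blocks_in \<sigma> B0)"
      using card_partition_on_ge_2[OF blocks(1,2)[OF B0(1)] B0(2) blocks(3)[OF B0(1)]] .
    then show "\<exists>B\<in>\<tau>. 1 < card (blocks_in \<sigma> B)"
      using B0(1) by (intro bexI[of _ B0]) simp_all
  qed
  then show "card \<tau> < card \<sigma>"
    using sum by simp
qed

lemma card_partition_on_le:
  fixes A :: "nat set"
  assumes "finite A" "partition_on A \<sigma>"
  shows "card \<sigma> \<le> card A"
proof -
  have "card \<sigma> \<le> card ((\<lambda>x. {x}) ` A)"
    using assms(1) partition_on_singletons assms(2) singletons_refines[OF assms(2)]
    by (rule refines_card_le(1))
  also have "\<dots> = card A"
    by (simp add: card_image)
  finally show ?thesis .
qed

lemma partition_on_UN:
  assumes "partition_on A \<pi>" "\<And>B. B \<in> \<pi> \<Longrightarrow> partition_on B (g B)"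
  shows "partition_on A (\<Union>B\<in>\<pi>. g B)"
proof (rule partition_onI)
  show "\<Union>(\<Union>B\<in>\<pi>. g B) = A"
    using partition_onD1[OF assms(1)] partition_onD1[OF assms(2)] by blast
  show "{} \<notin> (\<Union>B\<in>\<pi>. g B)"
    using partition_onD3[OF assms(2)] by blast
  fix C C'
  assume "C \<in> (\<Union>B\<in>\<pi>. g B)" "C' \<in> (\<Union>B\<in>\<pi>. g B)" "C \<noteq> C'"
  then obtain B B' where B: "B \<in> \<pi>" "C \<in> g B" and B': "B' \<in> \<pi>" "C' \<in> g B'"
    by blast
  show "disjnt C C'"
  proof (cases "B = B'")
    case True
    then show ?thesis
      using disjointD[OF partition_onD2[OF assms(2)[OF B(1)]] B(2)] B'(2) \<open>C \<noteq> C'\<close>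
      by (simp add: disjnt_def)
  next
    case False
    have "C \<subseteq> B" "C' \<subseteq> B'"
      using partition_on_block(1)[OF assms(2)] B B' by blast+
    moreover have "B \<inter> B' = {}"
      using disjointD[OF partition_onD2[OF assms(1)] B(1) B'(1) False] .
    ultimately show ?thesis
      by (auto simp: disjnt_def)
  qed
qed

lemma blocks_in_UN:
  assumes "partition_on A \<pi>" "\<And>B. B \<in> \<pi> \<Longrightarrow> partition_on B (g B)" "B0 \<in> \<pi>"
  shows "blocks_in (\<Union>B\<in>\<pi>. g B) B0 = g B0"
proof
  show "g B0 \<subseteq> blocks_in (\<Union>B\<in>\<pi>. g B) B0"
    using assms(3) partition_on_block(1)[OF assms(2)[OF assms(3)]] by (auto simp: blocks_in_def)
  show "blocks_in (\<Union>B\<in>\<pi>. g B) B0 \<subseteq> g B0"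
  proof
    fix C
    assume "C \<in> blocks_in (\<Union>B\<in>\<pi>. g B) B0"
    then obtain B where B: "B \<in> \<pi>" "C \<in> g B" "C \<subseteq> B0"
      by (auto simp: blocks_in_def)
    have "B0 = B"
      using refines_block_unique[OF assms(1) partition_on_block(2)[OF assms(2)[OF B(1)] B(2)] B(1)
          partition_on_block(1)[OF assms(2)[OF B(1)] B(2)] assms(3) B(3)] .
    with B(2) show "C \<in> g B0"
      by simp
  qed
qed

lemma UN_partitions_between:
  assumes "partition_on A \<sigma>" "partition_on A \<pi>" "refines \<sigma> \<pi>"
    and "\<And>B. B \<in> \<pi> \<Longrightarrow> g B \<in> partitions_between B (blocks_in \<sigma> B) {B}"
  shows "(\<Union>B\<in>\<pi>. g B) \<in> partitions_between A \<sigma> \<pi>"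
proof -
  have part: "partition_on B (g B)" and ref: "refines (blocks_in \<sigma> B) (g B)" if "B \<in> \<pi>" for B
    using assms(4)[OF that] by (auto simp: partitions_between_def)
  have "refines \<sigma> (\<Union>B\<in>\<pi>. g B)"
  proof (rule refinesI)
    fix C
    assume C: "C \<in> \<sigma>"
    with assms(3) obtain B where "B \<in> \<pi>" "C \<subseteq> B"
      by (rule refinesE)
    with C have "C \<in> blocks_in \<sigma> B"
      by (simp add: blocks_in_def)
    with ref[OF \<open>B \<in> \<pi>\<close>] obtain E where "E \<in> g B" "C \<subseteq> E"
      by (rule refinesE)
    with \<open>B \<in> \<pi>\<close> show "\<exists>E\<in>\<Union>B\<in>\<pi>. g B. C \<subseteq> E"
      by blast
  qed
  moreover have "refines (\<Union>B\<in>\<pi>. g B) \<pi>"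
    using partition_on_block(1)[OF part] by (auto intro!: refinesI)
  ultimately show ?thesis
    using partition_on_UN[OF assms(2) part] by (simp add: partitions_between_def)
qed

text \<open>The interval [\<sigma>, \<pi>] of the partition lattice is the product of the intervals
  [\<sigma> restricted to B, {B}], B \<in> \<pi>.\<close>

lemma sum_partitions_between_factor:
  fixes F :: "nat set \<Rightarrow> nat set set \<Rightarrow> 'b::comm_semiring_1"
  assumes "finite A" "partition_on A \<sigma>" "partition_on A \<pi>" "refines \<sigma> \<pi>"
  shows "(\<Sum>\<tau>\<in>partitions_between A \<sigma> \<pi>. \<Prod>B\<in>\<pi>. F B (blocks_in \<tau> B)) =
    (\<Prod>B\<in>\<pi>. \<Sum>\<rho>\<in>partitions_between B (blocks_in \<sigma> B) {B}. F B \<rho>)"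
proof -
  let ?T = "\<lambda>B. partitions_between B (blocks_in \<sigma> B) {B}"
  have restrict: "blocks_in (\<Union>B\<in>\<pi>. g B) B = g B" if "g \<in> Pi\<^sub>E \<pi> ?T" "B \<in> \<pi>" for g B
    using assms(3) _ that(2) by (rule blocks_in_UN) (use that(1) in \<open>auto simp: partitions_between_def\<close>)
  have "(\<Sum>\<tau>\<in>partitions_between A \<sigma> \<pi>. \<Prod>B\<in>\<pi>. F B (blocks_in \<tau> B)) =
      (\<Sum>g\<in>Pi\<^sub>E \<pi> ?T. \<Prod>B\<in>\<pi>. F B (g B))"
  proof (rule sum.reindex_bij_witness[where i = "\<lambda>g. \<Union>B\<in>\<pi>. g B" and j = "\<lambda>\<tau>. restrict (blocks_in \<tau>) \<pi>"])
    fix \<tau>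
    assume "\<tau> \<in> partitions_between A \<sigma> \<pi>"
    then have \<tau>: "partition_on A \<tau>" "refines \<sigma> \<tau>" "refines \<tau> \<pi>"
      by (auto simp: partitions_between_def)
    show "(\<Union>B\<in>\<pi>. restrict (blocks_in \<tau>) \<pi> B) = \<tau>"
      using UN_blocks_in[OF \<tau>(3)] by simp
    show "restrict (blocks_in \<tau>) \<pi> \<in> Pi\<^sub>E \<pi> ?T"
      using partition_on_blocks_in[OF \<tau>(1) assms(3) \<tau>(3)] refines_blocks_in[OF assms(2,3) \<tau>(2,3)]
        refines_single_block by (auto simp: partitions_between_def)
  next
    fix g
    assume g: "g \<in> Pi\<^sub>E \<pi> ?T"
    show "(\<Union>B\<in>\<pi>. g B) \<in> partitions_between A \<sigma> \<pi>"
      using assms(2-4) by (rule UN_partitions_between) (use g in auto)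
    show "restrict (blocks_in (\<Union>B\<in>\<pi>. g B)) \<pi> = g"
    proof
      fix B
      show "restrict (blocks_in (\<Union>B\<in>\<pi>. g B)) \<pi> B = g B"
        using restrict[OF g] PiE_arb[OF g] by (cases "B \<in> \<pi>") auto
    qed
  qed simp
  also have "\<dots> = (\<Prod>B\<in>\<pi>. \<Sum>\<rho>\<in>?T B. F B \<rho>)"
    using finite_elements[OF assms(1,3)] finite_partitions_between partition_on_block_finite[OF assms(3,1)]
    by (intro prod_sum_PiE[symmetric]) auto
  finally show ?thesis .
qed

lemma partitions_between_singletons:
  assumes "B \<subseteq> A"
  shows "partitions_between B (blocks_in ((\<lambda>x. {x}) ` A) B) {B} = {\<rho>. partition_on B \<rho>}"
proof -
  have "blocks_in ((\<lambda>x. {x}) ` A) B = (\<lambda>x. {x}) ` B"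
    using assms by (auto simp: blocks_in_def)
  then show ?thesis
    using singletons_refines refines_single_block by (auto simp: partitions_between_def)
qed

section \<open>The Moebius function of a lattice of set partitions\<close>

fun mobius_on_aux :: "nat set \<Rightarrow> nat \<Rightarrow> nat set set \<Rightarrow> nat set set \<Rightarrow> int" where
  "mobius_on_aux A 0 \<sigma> \<pi> = 0"
| "mobius_on_aux A (Suc f) \<sigma> \<pi> =
     (if \<sigma> = \<pi> then 1
      else if refines \<sigma> \<pi> then - (\<Sum>\<tau>\<in>partitions_between A \<sigma> \<pi> - {\<pi>}. mobius_on_aux A f \<sigma> \<tau>)
      else 0)"

definition mobius_on :: "nat set \<Rightarrow> nat set set \<Rightarrow> nat set set \<Rightarrow> int" where
  "mobius_on A \<sigma> \<pi> = mobius_on_aux A (Suc (card A)) \<sigma> \<pi>"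

lemma mobius_eq_mobius_on: "mobius n \<sigma> \<pi> = mobius_on {1..n} \<sigma> \<pi>"
proof -
  have between: "{\<tau> \<in> set_partitions n. refines \<sigma> \<tau> \<and> refines \<tau> \<pi> \<and> \<tau> \<noteq> \<pi>} =
      partitions_between {1..n} \<sigma> \<pi> - {\<pi>}" for \<pi>
    by (auto simp: set_partitions_def partitions_between_def)
  have "mobius_aux n f \<sigma> \<pi> = mobius_on_aux {1..n} f \<sigma> \<pi>" for f
    by (induction f arbitrary: \<pi>) (simp_all add: between)
  moreover have "card {1..n} = n"
    by simp
  ultimately show ?thesis
    by (simp only: mobius_def mobius_on_def)
qed

lemma mobius_on_self [simp]: "mobius_on A \<sigma> \<sigma> = 1"
  by (simp add: mobius_on_def)

lemma card_partitions_between_less: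
  assumes "finite A" "partition_on A \<sigma>" "partition_on A \<pi>" "\<tau> \<in> partitions_between A \<sigma> \<pi> - {\<pi>}"
  shows "card \<pi> < card \<tau>" "card \<tau> \<le> card \<sigma>"
  using assms(4) refines_card_le[OF assms(1) _ assms(3)] refines_card_le[OF assms(1,2)]
  by (auto simp: partitions_between_def)

lemma mobius_on_aux_fuel:
  assumes "finite A" "partition_on A \<sigma>"
  shows "partition_on A \<pi> \<Longrightarrow> card \<sigma> - card \<pi> < f \<Longrightarrow> card \<sigma> - card \<pi> < f' \<Longrightarrow>
    mobius_on_aux A f \<sigma> \<pi> = mobius_on_aux A f' \<sigma> \<pi>"
proof (induction f arbitrary: f' \<pi>)
  case (Suc f)
  then obtain f'' where f': "f' = Suc f''"
    by (cases f') auto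
  have "mobius_on_aux A f \<sigma> \<tau> = mobius_on_aux A f'' \<sigma> \<tau>" if "\<tau> \<in> partitions_between A \<sigma> \<pi> - {\<pi>}" for \<tau>
  proof (rule Suc.IH)
    show "partition_on A \<tau>"
      using that by (simp add: partitions_between_def)
    show "card \<sigma> - card \<tau> < f" "card \<sigma> - card \<tau> < f''"
      using card_partitions_between_less[OF assms Suc.prems(1) that] Suc.prems(2,3) f' by linarith+
  qed
  then have "(\<Sum>\<tau>\<in>partitions_between A \<sigma> \<pi> - {\<pi>}. mobius_on_aux A f \<sigma> \<tau>) =
      (\<Sum>\<tau>\<in>partitions_between A \<sigma> \<pi> - {\<pi>}. mobius_on_aux A f'' \<sigma> \<tau>)"
    by (rule sum.cong[OF refl])
  then show ?case
    unfolding f' by simp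
qed simp

lemma sum_mobius_on_between_eq_0:
  assumes "finite A" "partition_on A \<sigma>" "partition_on A \<pi>" "refines \<sigma> \<pi>" "\<sigma> \<noteq> \<pi>"
  shows "(\<Sum>\<tau>\<in>partitions_between A \<sigma> \<pi>. mobius_on A \<sigma> \<tau>) = 0"
proof -
  have "A \<noteq> {}"
    using assms(2,3,5) by (auto simp: partition_on_empty)
  have "mobius_on A \<sigma> \<tau> = mobius_on_aux A (card A) \<sigma> \<tau>" if "\<tau> \<in> partitions_between A \<sigma> \<pi>" for \<tau>
  proof -
    have "partition_on A \<tau>"
      using that by (simp add: partitions_between_def)
    moreover have "card \<sigma> \<le> card A" "0 < card \<tau>" "0 < card A"
      using card_partition_on_le[OF assms(1,2)] card_partition_on_pos[OF assms(1) _ \<open>A \<noteq> {}\<close>]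
        \<open>partition_on A \<tau>\<close> assms(1) \<open>A \<noteq> {}\<close> by (auto simp: card_gt_0_iff)
    ultimately show ?thesis
      unfolding mobius_on_def by (intro mobius_on_aux_fuel[OF assms(1,2)]) auto
  qed
  then have "mobius_on A \<sigma> \<pi> = - (\<Sum>\<tau>\<in>partitions_between A \<sigma> \<pi> - {\<pi>}. mobius_on A \<sigma> \<tau>)"
    using assms(4,5) by (simp add: mobius_on_def)
  moreover have "\<pi> \<in> partitions_between A \<sigma> \<pi>"
    using assms(3,4) refines_reflexive by (simp add: partitions_between_def)
  ultimately show ?thesis
    using sum.remove[OF finite_partitions_between[OF assms(1)], of \<pi> \<sigma> \<pi> "mobius_on A \<sigma>"] by simp
qed

lemma card_blocks_in_le:
  assumes "finite A" "partition_on A \<sigma>" "partition_on A \<pi>" "refines \<sigma> \<pi>" "B0 \<in> \<pi>"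
  shows "card (blocks_in \<sigma> B0) + card \<pi> \<le> card \<sigma> + 1"
proof -
  have fin: "finite \<pi>"
    using assms(1,3) by (rule finite_elements)
  have "card \<pi> - 1 = (\<Sum>B\<in>\<pi> - {B0}. 1)"
    using fin assms(5) by simp
  also have "\<dots> \<le> (\<Sum>B\<in>\<pi> - {B0}. card (blocks_in \<sigma> B))"
  proof (rule sum_mono)
    fix B
    assume "B \<in> \<pi> - {B0}"
    then have "B \<in> \<pi>"
      by blast
    show "1 \<le> card (blocks_in \<sigma> B)"
      using card_partition_on_pos[OF partition_on_block_finite[OF assms(3,1) \<open>B \<in> \<pi>\<close>]
          partition_on_blocks_in[OF assms(2,3,4) \<open>B \<in> \<pi>\<close>] partition_on_block(2)[OF assms(3) \<open>B \<in> \<pi>\<close>]]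
      by simp
  qed
  also have "card (blocks_in \<sigma> B0) + \<dots> = card \<sigma>"
    using card_blocks_in_sum[OF assms(2,3,4,1)] sum.remove[OF fin assms(5), of "\<lambda>B. card (blocks_in \<sigma> B)"]
    by simp
  finally show ?thesis
    by linarith
qed

lemma card_blocks_in_diff_less:
  assumes "finite A" "partition_on A \<sigma>" "partition_on A \<pi>" "refines \<sigma> \<pi>"
    and "B \<in> \<pi>" "\<rho> \<in> partitions_between B (blocks_in \<sigma> B) {B} - {{B}}"
  shows "card (blocks_in \<sigma> B) - card \<rho> < card \<sigma> - card \<pi>"
proof -
  have fin: "finite B" "B \<noteq> {}"
    using partition_on_block_finite[OF assms(3,1,5)] partition_on_block(2)[OF assms(3,5)] .
  have part: "partition_on B (blocks_in \<sigma> B)" "partition_on B \<rho>" "refines (blocks_in \<sigma> B) \<rho>"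
    using partition_on_blocks_in[OF assms(2-5)] assms(6) by (auto simp: partitions_between_def)
  have "card (blocks_in \<sigma> B) + card \<pi> \<le> card \<sigma> + 1"
    using assms(1-5) by (rule card_blocks_in_le)
  moreover have "2 \<le> card \<rho>"
    using fin(1) part(2) _ fin(2) by (rule card_partition_on_ge_2) (use assms(6) in blast)
  moreover have "card \<rho> \<le> card (blocks_in \<sigma> B)"
    using fin(1) part by (rule refines_card_le(1))
  ultimately show ?thesis
    by linarith
qed

lemma sum_prod_mobius_on_blocks_eq_0:
  assumes "finite A" "partition_on A \<sigma>" "partition_on A \<pi>" "refines \<sigma> \<pi>" "\<sigma> \<noteq> \<pi>"
    and smaller: "\<And>B \<rho>. B \<in> \<pi> \<Longrightarrow> \<rho> \<in> partitions_between B (blocks_in \<sigma> B) {B} - {{B}} \<Longrightarrow>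
      mobius_on B (blocks_in \<sigma> B) \<rho> = (\<Prod>C\<in>\<rho>. mobius_on C (blocks_in \<sigma> C) {C})"
  shows "(\<Sum>\<tau>\<in>partitions_between A \<sigma> \<pi>. \<Prod>C\<in>\<tau>. mobius_on C (blocks_in \<sigma> C) {C}) = 0"
proof -
  define H where "H \<rho> = (\<Prod>C\<in>\<rho>. mobius_on C (blocks_in \<sigma> C) {C})" for \<rho>
  have "(\<Sum>\<tau>\<in>partitions_between A \<sigma> \<pi>. H \<tau>) =
      (\<Sum>\<tau>\<in>partitions_between A \<sigma> \<pi>. \<Prod>B\<in>\<pi>. H (blocks_in \<tau> B))"
    unfolding H_def using prod_blocks_in[OF _ assms(3) _ assms(1)]
    by (intro sum.cong) (auto simp: partitions_between_def)
  also have "\<dots> = (\<Prod>B\<in>\<pi>. \<Sum>\<rho>\<in>partitions_between B (blocks_in \<sigma> B) {B}. H \<rho>)"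
    using assms(1-4) by (rule sum_partitions_between_factor)
  also have "\<dots> = 0"
  proof -
    obtain B0 where B0: "B0 \<in> \<pi>" "blocks_in \<sigma> B0 \<noteq> {B0}"
      using refines_neqE[OF assms(4,5)] .
    have B0_block: "finite B0" "B0 \<noteq> {}"
      using partition_on_block_finite[OF assms(3,1) B0(1)] partition_on_block(2)[OF assms(3) B0(1)] .
    have part: "partition_on B0 (blocks_in \<sigma> B0)"
      using partition_on_blocks_in[OF assms(2,3,4) B0(1)] .
    have "(\<Sum>\<rho>\<in>partitions_between B0 (blocks_in \<sigma> B0) {B0}. H \<rho>) =
        (\<Sum>\<rho>\<in>partitions_between B0 (blocks_in \<sigma> B0) {B0}. mobius_on B0 (blocks_in \<sigma> B0) \<rho>)"
    proof (rule sum.cong[OF refl])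
      fix \<rho>
      assume "\<rho> \<in> partitions_between B0 (blocks_in \<sigma> B0) {B0}"
      then show "H \<rho> = mobius_on B0 (blocks_in \<sigma> B0) \<rho>"
        using smaller[OF B0(1), of \<rho>] by (cases "\<rho> = {B0}") (simp_all add: H_def)
    qed
    also have "\<dots> = 0"
      using B0_block(1) part partition_on_space[OF B0_block(2)] refines_single_block[OF part] B0(2)
      by (rule sum_mobius_on_between_eq_0)
    finally show ?thesis
      using B0(1) finite_elements[OF assms(1,3)] by (intro prod_zero) auto
  qed
  finally show ?thesis
    unfolding H_def .
qed

lemma mobius_on_factor:
  assumes "finite A" "partition_on A \<sigma>" "partition_on A \<pi>" "refines \<sigma> \<pi>"
  shows "mobius_on A \<sigma> \<pi> = (\<Prod>B\<in>\<pi>. mobius_on B (blocks_in \<sigma> B) {B})"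
  using assms
proof (induction "card \<sigma> - card \<pi>" arbitrary: A \<sigma> \<pi> rule: less_induct)
  case less
  define G where "G \<tau> = (\<Prod>C\<in>\<tau>. mobius_on C (blocks_in \<sigma> C) {C})" for \<tau>
  show ?case
  proof (cases "\<sigma> = \<pi>")
    case True
    then show ?thesis
      using blocks_in_self[OF less.prems(3)] by simp
  next
    case False
    have outer: "mobius_on A \<sigma> \<tau> = G \<tau>" if \<tau>: "\<tau> \<in> partitions_between A \<sigma> \<pi> - {\<pi>}" for \<tau>
    proof -
      have "card \<sigma> - card \<tau> < card \<sigma> - card \<pi>"
        using card_partitions_between_less[OF less.prems(1-3) \<tau>] by linarith
      then show ?thesis
        unfolding G_def using \<tau> less.hyps less.prems(1,2) by (auto simp: partitions_between_def)
    qed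
    have inner: "mobius_on B (blocks_in \<sigma> B) \<rho> = G \<rho>"
      if B: "B \<in> \<pi>" and \<rho>: "\<rho> \<in> partitions_between B (blocks_in \<sigma> B) {B} - {{B}}" for B \<rho>
    proof -
      have part: "partition_on B (blocks_in \<sigma> B)" "partition_on B \<rho>" "refines (blocks_in \<sigma> B) \<rho>"
        using partition_on_blocks_in[OF less.prems(2-4) B] \<rho> by (auto simp: partitions_between_def)
      have "mobius_on B (blocks_in \<sigma> B) \<rho> = (\<Prod>C\<in>\<rho>. mobius_on C (blocks_in (blocks_in \<sigma> B) C) {C})"
        using less.hyps[OF card_blocks_in_diff_less[OF less.prems B \<rho>]]
          partition_on_block_finite[OF less.prems(3,1) B] part by blast
      also have "\<dots> = G \<rho>"
        unfolding G_def using partition_on_block(1)[OF part(2)] by (simp add: blocks_in_blocks_in)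
      finally show ?thesis .
    qed
    have fin: "finite (partitions_between A \<sigma> \<pi>)" "\<pi> \<in> partitions_between A \<sigma> \<pi>"
      using finite_partitions_between[OF less.prems(1)] less.prems(3,4) refines_reflexive
      by (auto simp: partitions_between_def)
    have "mobius_on A \<sigma> \<pi> + (\<Sum>\<tau>\<in>partitions_between A \<sigma> \<pi> - {\<pi>}. mobius_on A \<sigma> \<tau>) = 0"
      using sum_mobius_on_between_eq_0[OF less.prems False] sum.remove[OF fin, of "mobius_on A \<sigma>"]
      by simp
    moreover have "G \<pi> + (\<Sum>\<tau>\<in>partitions_between A \<sigma> \<pi> - {\<pi>}. G \<tau>) = 0"
      using sum_prod_mobius_on_blocks_eq_0[OF less.prems False] inner sum.remove[OF fin, of G]
      unfolding G_def by simp
    ultimately show ?thesis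
      using outer unfolding G_def by simp
  qed
qed

section \<open>Relabelling partitions\<close>

definition map_partition :: "('a \<Rightarrow> 'b) \<Rightarrow> 'a set set \<Rightarrow> 'b set set" where
  "map_partition h \<sigma> = (`) h ` \<sigma>"

lemma partition_on_map_partition:
  assumes "bij_betw h A A'" "partition_on A \<sigma>"
  shows "partition_on A' (map_partition h \<sigma>)"
proof -
  have "inj_on h A" "h ` A = A'"
    using assms(1) by (simp_all add: bij_betw_def)
  then have "partition_on A' ((`) h ` \<sigma> - {{}})"
    using partition_on_inj_image[OF assms(2) \<open>inj_on h A\<close>] by simp
  moreover have "{} \<notin> (`) h ` \<sigma>"
    using partition_onD3[OF assms(2)] by auto
  ultimately show ?thesis
    by (simp add: map_partition_def)
qed

lemma map_partition_inverse:
  assumes "\<And>x. x \<in> A \<Longrightarrow> g (h x) = x" "partition_on A \<sigma>"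
  shows "map_partition g (map_partition h \<sigma>) = \<sigma>"
proof -
  have "g ` h ` C = C" if "C \<in> \<sigma>" for C
  proof -
    have "g ` h ` C = (\<lambda>x. g (h x)) ` C"
      by (simp add: image_image)
    also have "\<dots> = C"
      using assms(1) partition_on_block(1)[OF assms(2) that] by (simp add: subset_iff cong: image_cong)
    finally show ?thesis .
  qed
  then show ?thesis
    by (simp add: map_partition_def image_image cong: image_cong)
qed

lemma refines_map_partition:
  assumes "refines \<sigma> \<tau>"
  shows "refines (map_partition h \<sigma>) (map_partition h \<tau>)"
proof (rule refinesI)
  fix C'
  assume "C' \<in> map_partition h \<sigma>"
  then obtain C where "C \<in> \<sigma>" "C' = h ` C"
    by (auto simp: map_partition_def)
  moreover obtain D where "D \<in> \<tau>" "C \<subseteq> D"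
    using assms \<open>C \<in> \<sigma>\<close> by (rule refinesE)
  ultimately show "\<exists>D'\<in>map_partition h \<tau>. C' \<subseteq> D'"
    unfolding map_partition_def by (intro bexI[of _ "h ` D"]) auto
qed

lemma refines_map_partition_iff:
  assumes "bij_betw h A A'" "partition_on A \<sigma>" "partition_on A \<tau>"
  shows "refines (map_partition h \<sigma>) (map_partition h \<tau>) \<longleftrightarrow> refines \<sigma> \<tau>"
proof
  have inverse: "\<And>x. x \<in> A \<Longrightarrow> inv_into A h (h x) = x"
    using assms(1) by (simp add: bij_betw_def)
  assume "refines (map_partition h \<sigma>) (map_partition h \<tau>)"
  then have "refines (map_partition (inv_into A h) (map_partition h \<sigma>))
      (map_partition (inv_into A h) (map_partition h \<tau>))"
    by (rule refines_map_partition)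
  then show "refines \<sigma> \<tau>"
    by (simp only: map_partition_inverse[where g = "inv_into A h" and h = h, OF inverse assms(2)]
        map_partition_inverse[where g = "inv_into A h" and h = h, OF inverse assms(3)])
qed (rule refines_map_partition)

lemma map_partition_inv_into:
  assumes "bij_betw h A A'" "partition_on A \<sigma>"
  shows "map_partition (inv_into A h) (map_partition h \<sigma>) = \<sigma>"
proof (rule map_partition_inverse[OF _ assms(2)])
  show "\<And>x. x \<in> A \<Longrightarrow> inv_into A h (h x) = x"
    using assms(1) by (simp add: bij_betw_def)
qed

lemma map_partition_map_partition_inv_into:
  assumes "bij_betw h A A'" "partition_on A' \<sigma>'"
  shows "map_partition h (map_partition (inv_into A h) \<sigma>') = \<sigma>'"
proof (rule map_partition_inverse[OF _ assms(2)])
  show "\<And>y. y \<in> A' \<Longrightarrow> h (inv_into A h y) = y"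
    using assms(1) f_inv_into_f unfolding bij_betw_def by force
qed

lemma bij_betw_map_partition:
  assumes "bij_betw h A A'"
  shows "bij_betw (map_partition h) {\<sigma>. partition_on A \<sigma>} {\<sigma>. partition_on A' \<sigma>}"
proof (rule bij_betw_byWitness[where f' = "map_partition (inv_into A h)"])
  show "map_partition h ` {\<sigma>. partition_on A \<sigma>} \<subseteq> {\<sigma>. partition_on A' \<sigma>}"
    using partition_on_map_partition[OF assms] by blast
  show "map_partition (inv_into A h) ` {\<sigma>. partition_on A' \<sigma>} \<subseteq> {\<sigma>. partition_on A \<sigma>}"
    using partition_on_map_partition[OF bij_betw_inv_into[OF assms]] by blast
qed (use map_partition_inv_into[OF assms] map_partition_map_partition_inv_into[OF assms] in blast)+

lemma bij_betw_map_partition_between: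
  assumes "bij_betw h A A'" "partition_on A \<sigma>" "partition_on A \<pi>"
  shows "bij_betw (map_partition h) (partitions_between A \<sigma> \<pi> - {\<pi>})
    (partitions_between A' (map_partition h \<sigma>) (map_partition h \<pi>) - {map_partition h \<pi>})"
proof (rule bij_betw_byWitness[where f' = "map_partition (inv_into A h)"])
  show "\<forall>\<tau>\<in>partitions_between A \<sigma> \<pi> - {\<pi>}. map_partition (inv_into A h) (map_partition h \<tau>) = \<tau>"
    using map_partition_inv_into[OF assms(1)] by (auto simp: partitions_between_def)
  show "\<forall>\<tau>'\<in>partitions_between A' (map_partition h \<sigma>) (map_partition h \<pi>) - {map_partition h \<pi>}.
      map_partition h (map_partition (inv_into A h) \<tau>') = \<tau>'"
    using map_partition_map_partition_inv_into[OF assms(1)] by (auto simp: partitions_between_def)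
  show "map_partition h ` (partitions_between A \<sigma> \<pi> - {\<pi>}) \<subseteq>
      partitions_between A' (map_partition h \<sigma>) (map_partition h \<pi>) - {map_partition h \<pi>}"
  proof
    fix \<tau>'
    assume "\<tau>' \<in> map_partition h ` (partitions_between A \<sigma> \<pi> - {\<pi>})"
    then obtain \<tau> where \<tau>: "partition_on A \<tau>" "refines \<sigma> \<tau>" "refines \<tau> \<pi>" "\<tau> \<noteq> \<pi>"
        and \<tau>': "\<tau>' = map_partition h \<tau>"
      by (auto simp: partitions_between_def)
    have "map_partition h \<tau> \<noteq> map_partition h \<pi>"
      using map_partition_inv_into[OF assms(1) \<tau>(1)] map_partition_inv_into[OF assms(1) assms(3)] \<tau>(4)
      by metis
    then show "\<tau>' \<in> partitions_between A' (map_partition h \<sigma>) (map_partition h \<pi>) - {map_partition h \<pi>}"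
      using partition_on_map_partition[OF assms(1) \<tau>(1)] refines_map_partition \<tau>(2,3)
      unfolding \<tau>' by (auto simp: partitions_between_def)
  qed
  show "map_partition (inv_into A h) ` (partitions_between A' (map_partition h \<sigma>) (map_partition h \<pi>) -
      {map_partition h \<pi>}) \<subseteq> partitions_between A \<sigma> \<pi> - {\<pi>}"
  proof
    fix \<tau>
    assume "\<tau> \<in> map_partition (inv_into A h) `
      (partitions_between A' (map_partition h \<sigma>) (map_partition h \<pi>) - {map_partition h \<pi>})"
    then obtain \<tau>' where \<tau>': "partition_on A' \<tau>'" "refines (map_partition h \<sigma>) \<tau>'"
        "refines \<tau>' (map_partition h \<pi>)" "\<tau>' \<noteq> map_partition h \<pi>" and \<tau>: "\<tau> = map_partition (inv_into A h) \<tau>'"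
      by (auto simp: partitions_between_def)
    have part: "partition_on A \<tau>"
      unfolding \<tau> using bij_betw_inv_into[OF assms(1)] \<tau>'(1) by (rule partition_on_map_partition)
    have h\<tau>: "map_partition h \<tau> = \<tau>'"
      unfolding \<tau> using map_partition_map_partition_inv_into[OF assms(1) \<tau>'(1)] .
    show "\<tau> \<in> partitions_between A \<sigma> \<pi> - {\<pi>}"
      using part \<tau>'(2-4) refines_map_partition_iff[OF assms(1,2) part]
        refines_map_partition_iff[OF assms(1) part assms(3)] h\<tau>
      by (auto simp: partitions_between_def)
  qed
qed

lemma mobius_on_map_partition:
  assumes "bij_betw h A A'" "partition_on A \<sigma>" "partition_on A \<pi>"
  shows "mobius_on A \<sigma> \<pi> = mobius_on A' (map_partition h \<sigma>) (map_partition h \<pi>)"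
proof -
  have inj: "map_partition h \<sigma>' = map_partition h \<pi>' \<longleftrightarrow> \<sigma>' = \<pi>'"
    if "partition_on A \<sigma>'" "partition_on A \<pi>'" for \<sigma>' \<pi>'
    using map_partition_inv_into[OF assms(1) that(1)] map_partition_inv_into[OF assms(1) that(2)] by metis
  have aux: "mobius_on_aux A f \<sigma> \<pi>' = mobius_on_aux A' f (map_partition h \<sigma>) (map_partition h \<pi>')"
    if "partition_on A \<pi>'" for f \<pi>'
    using that
  proof (induction f arbitrary: \<pi>')
    case (Suc f)
    have "(\<Sum>\<tau>\<in>partitions_between A \<sigma> \<pi>' - {\<pi>'}. mobius_on_aux A f \<sigma> \<tau>) =
      (\<Sum>\<tau>\<in>partitions_between A \<sigma> \<pi>' - {\<pi>'}. mobius_on_aux A' f (map_partition h \<sigma>) (map_partition h \<tau>))"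
      using Suc.IH by (intro sum.cong) (auto simp: partitions_between_def)
    also have "\<dots> = (\<Sum>\<tau>\<in>partitions_between A' (map_partition h \<sigma>) (map_partition h \<pi>') -
        {map_partition h \<pi>'}. mobius_on_aux A' f (map_partition h \<sigma>) \<tau>)"
      by (rule sum.reindex_bij_betw[OF bij_betw_map_partition_between[OF assms(1,2) Suc.prems]])
    finally show ?case
      using inj[OF assms(2) Suc.prems] refines_map_partition_iff[OF assms(1,2) Suc.prems] by simp
  qed simp
  have "card A' = card A"
    using assms(1) by (simp add: bij_betw_same_card)
  then show ?thesis
    using aux[OF assms(3)] by (simp only: mobius_on_def)
qed

lemma block_index_eq_Min:
  assumes "partition_on A \<sigma>" "B \<in> \<sigma>" "j \<in> B" "finite B"
  shows "block_index \<sigma> j = Min B"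
  unfolding block_index_def
proof (rule Least_equality)
  have "Min B \<in> B"
    using assms(3,4) by (intro Min_in) auto
  with assms(2,3) show "\<exists>C\<in>\<sigma>. Min B \<in> C \<and> j \<in> C"
    by blast
  fix i
  assume "\<exists>C\<in>\<sigma>. i \<in> C \<and> j \<in> C"
  then obtain C where "C \<in> \<sigma>" "i \<in> C" "j \<in> C"
    by blast
  with partition_on_block_eq[OF assms(1) assms(2) _ assms(3)] have "i \<in> B"
    by blast
  then show "Min B \<le> i"
    using assms(4) by simp
qed

lemma block_index_mem:
  assumes "partition_on A \<sigma>" "finite A" "j \<in> A"
  shows "block_index \<sigma> j \<in> A"
proof -
  obtain B where B: "B \<in> \<sigma>" "j \<in> B"
    using assms(3) partition_onD1[OF assms(1)] by blast
  have "finite B" "B \<noteq> {}" "B \<subseteq> A"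
    using partition_on_block_finite[OF assms(1,2) B(1)] partition_on_block[OF assms(1) B(1)] by auto
  then show ?thesis
    using block_index_eq_Min[OF assms(1) B] Min_in by auto
qed

lemma block_index_eq_imp_same_block:
  assumes "partition_on A \<sigma>" "finite A" "i \<in> A" "j \<in> A" "block_index \<sigma> i = block_index \<sigma> j"
  shows "\<exists>B\<in>\<sigma>. i \<in> B \<and> j \<in> B"
proof -
  obtain B C where B: "B \<in> \<sigma>" "i \<in> B" and C: "C \<in> \<sigma>" "j \<in> C"
    using assms(3,4) partition_onD1[OF assms(1)] by blast
  have fin: "finite B" "B \<noteq> {}" "finite C" "C \<noteq> {}"
    using partition_on_block_finite[OF assms(1,2)] partition_on_block(2)[OF assms(1)] B C by auto
  have "Min B = Min C"
    using assms(5) block_index_eq_Min[OF assms(1) B fin(1)] block_index_eq_Min[OF assms(1) C fin(3)] by simp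
  then have "B = C"
    using partition_on_block_eq[OF assms(1) B(1) C(1)] Min_in[OF fin(1,2)] Min_in[OF fin(3,4)] by metis
  with B C show ?thesis
    by blast
qed

lemma block_index_blocks_in:
  assumes "finite A" "partition_on A \<sigma>" "partition_on A \<pi>" "refines \<sigma> \<pi>" "B \<in> \<pi>" "j \<in> B"
  shows "block_index (blocks_in \<sigma> B) j = block_index \<sigma> j"
proof -
  have part: "partition_on B (blocks_in \<sigma> B)"
    using assms(2-5) by (rule partition_on_blocks_in)
  obtain C where C: "C \<in> blocks_in \<sigma> B" "j \<in> C"
    using assms(6) partition_onD1[OF part] by blast
  then have "C \<in> \<sigma>" "finite C"
    using partition_on_block_finite[OF assms(2,1)] by (auto simp: blocks_in_def)
  then show ?thesis
    using block_index_eq_Min[OF part C] block_index_eq_Min[OF assms(2) _ C(2)] by simp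
qed

lemma block_index_map_partition:
  assumes "bij_betw e A A'" "strict_mono_on A e" "finite A" "partition_on A \<rho>" "j \<in> A"
  shows "block_index (map_partition e \<rho>) (e j) = e (block_index \<rho> j)"
proof -
  obtain C where C: "C \<in> \<rho>" "j \<in> C"
    using assms(5) partition_onD1[OF assms(4)] by blast
  have fin: "finite C" "C \<noteq> {}" "C \<subseteq> A"
    using partition_on_block_finite[OF assms(4,3) C(1)] partition_on_block[OF assms(4) C(1)] by auto
  have "Min (e ` C) = e (Min C)"
  proof (rule Min_eqI)
    fix y
    assume "y \<in> e ` C"
    then obtain x where "x \<in> C" "y = e x"
      by blast
    with fin show "e (Min C) \<le> y"
      using strict_mono_on_leD[OF assms(2)] Min_in[OF fin(1,2)] by (meson Min_le subsetD)
  qed (use fin in auto)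
  moreover have "e ` C \<in> map_partition e \<rho>"
    using C(1) by (simp add: map_partition_def)
  ultimately show ?thesis
    using block_index_eq_Min[OF partition_on_map_partition[OF assms(1,4)] _ imageI[OF C(2)]]
      block_index_eq_Min[OF assms(4) C fin(1)] fin(1) by simp
qed

text \<open>The j-th smallest element of B, counting from 1.\<close>

definition set_enum :: "nat set \<Rightarrow> nat \<Rightarrow> nat" where
  "set_enum B j = sorted_list_of_set B ! (j - 1)"

lemma restrict_seq_set_enum: "restrict_seq X B = X \<circ> set_enum B"
  by (simp add: restrict_seq_def set_enum_def fun_eq_iff)

lemma sorted_list_of_set_set_enum: "sorted_list_of_set B = map (set_enum B) [1..<card B + 1]"
  by (rule nth_equalityI) (simp_all add: set_enum_def nth_map_upt del: upt_Suc)

lemma bij_betw_set_enum: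
  assumes "finite B"
  shows "bij_betw (set_enum B) {1..card B} B"
proof -
  have "bij_betw (\<lambda>j. j - 1) {1..card B} {..<card B}"
    by (rule bij_betw_byWitness[where f' = Suc]) auto
  moreover have "bij_betw ((!) (sorted_list_of_set B)) {..<card B} B"
    by (rule bij_betw_nth) (use assms in simp_all)
  ultimately show ?thesis
    unfolding set_enum_def using bij_betw_trans by (fastforce simp: comp_def)
qed

lemma strict_mono_on_set_enum: "strict_mono_on {1..card B} (set_enum B)"
  by (rule strict_mono_onI) (auto simp: set_enum_def intro: sorted_wrt_nth_less)

lemma mobius_on_map_partition_set_enum:
  assumes "finite B" "B \<noteq> {}" "partition_on {1..card B} \<rho>"
  shows "mobius_on B (map_partition (set_enum B) \<rho>) {B} = mobius (card B) \<rho> {{1..card B}}"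
proof -
  have e: "bij_betw (set_enum B) {1..card B} B"
    using assms(1) by (rule bij_betw_set_enum)
  then have "map_partition (set_enum B) {{1..card B}} = {B}"
    by (simp add: map_partition_def bij_betw_def)
  moreover have "{1..card B} \<noteq> {}"
    using assms(1,2) by (simp add: card_gt_0_iff Suc_le_eq)
  ultimately show ?thesis
    using mobius_on_map_partition[OF e assms(3) partition_on_space] by (simp add: mobius_eq_mobius_on)
qed

section \<open>Moments of words in the free product\<close>

lemma not_successively_split:
  "\<not> successively P xs \<Longrightarrow> \<exists>us x y vs. xs = us @ x # y # vs \<and> \<not> P x y"
proof (induction xs)
  case (Cons x xs)
  show ?case
  proof (cases xs)
    case (Cons y ys)
    show ?thesis
    proof (cases "P x y")
      case True
      then obtain us z z' vs where "xs = us @ z # z' # vs" "\<not> P z z'"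
        using Cons.IH Cons.prems \<open>xs = y # ys\<close> by auto
      then show ?thesis
        by (intro exI[of _ "x # us"]) auto
    next
      case False
      then show ?thesis
        using \<open>xs = y # ys\<close> by (intro exI[of _ "[]"]) auto
    qed
  qed (use Cons.prems in simp)
qed simp

locale free_exchangeability =
  fixes smA :: "complex \<Rightarrow> 'a::ring_1 \<Rightarrow> 'a"
    and \<phi> :: "'a \<Rightarrow> complex"
    and smU :: "complex \<Rightarrow> 'u::ring_1 \<Rightarrow> 'u"
    and \<iota> :: "nat \<Rightarrow> 'a \<Rightarrow> 'u"
    and \<psi> :: "'u \<Rightarrow> complex"
  assumes nc_prob_space: "nc_prob_space smA \<phi>"
    and free_exch_system: "free_exch_system smA \<phi> smU \<iota> \<psi>"
begin

text \<open>A word is a list of letters (k, a), standing for the element \<iota> k a of the k-th copy.\<close>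

definition moment :: "(nat \<times> 'a) list \<Rightarrow> complex" where
  "moment w = \<psi> (prod_list (map (\<lambda>(k, a). \<iota> k a) w))"

definition centered :: "'a \<Rightarrow> 'a" where
  "centered a = a - smA (\<phi> a) 1"

definition indices :: "(nat \<times> 'a) list \<Rightarrow> nat set" where
  "indices w = fst ` set w"

definition alternating_centered :: "(nat \<times> 'a) list \<Rightarrow> bool" where
  "alternating_centered w \<longleftrightarrow>
     successively (\<lambda>p q. fst p \<noteq> fst q) w \<and> (\<forall>(k, a) \<in> set w. \<phi> a = 0)"

lemma phi_add: "\<phi> (x + y) = \<phi> x + \<phi> y"
  and phi_smult: "\<phi> (smA c x) = c * \<phi> x"
  and phi_one: "\<phi> 1 = 1"
  using nc_prob_space by (auto simp: nc_prob_space_def unital_linear_functional_def)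

lemma psi_add: "\<psi> (x + y) = \<psi> x + \<psi> y"
  and psi_smult: "\<psi> (smU c x) = c * \<psi> x"
  and psi_one: "\<psi> 1 = 1"
  using free_exch_system by (auto simp: free_exch_system_def unital_linear_functional_def)

lemma smU_mult_left: "smU c (x * y) = smU c x * y"
  and smU_mult_right: "smU c (x * y) = x * smU c y"
  using free_exch_system unfolding free_exch_system_def complex_unital_algebra_def by blast+

lemma iota_add: "\<iota> k (x + y) = \<iota> k x + \<iota> k y"
  and iota_mult: "\<iota> k (x * y) = \<iota> k x * \<iota> k y"
  and iota_one: "\<iota> k 1 = 1"
  and iota_smult: "\<iota> k (smA c x) = smU c (\<iota> k x)"
  and psi_iota: "\<psi> (\<iota> k a) = \<phi> a"
  using free_exch_system by (auto simp: free_exch_system_def unital_alg_hom_def)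

lemma iota_diff: "\<iota> k (x - y) = \<iota> k x - \<iota> k y"
  using iota_add[of k "x - y" y] by (simp add: eq_diff_eq)

lemma phi_diff: "\<phi> (x - y) = \<phi> x - \<phi> y"
  using phi_add[of "x - y" y] by (simp add: eq_diff_eq)

lemma phi_centered: "\<phi> (centered a) = 0"
  by (simp add: centered_def phi_diff phi_smult phi_one)

lemma iota_centered: "\<iota> k a = \<iota> k (centered a) + smU (\<phi> a) 1"
  by (simp add: centered_def iota_diff iota_smult iota_one)

lemma moment_Nil [simp]: "moment [] = 1"
  by (simp add: moment_def psi_one)

lemma moment_merge: "moment (u @ (k, a) # (k, b) # u') = moment (u @ (k, a * b) # u')"
  by (simp add: moment_def iota_mult mult.assoc)

lemma moment_split:
  "moment (u @ (k, a) # u') = \<phi> a * moment (u @ u') + moment (u @ (k, centered a) # u')"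
proof -
  define p where "p v = prod_list (map (\<lambda>(k, a). \<iota> k a) v)" for v
  have "p (u @ (k, a) # u') = p u * ((\<iota> k (centered a) + smU (\<phi> a) 1) * p u')"
    by (simp add: p_def flip: iota_centered)
  also have "\<dots> = p (u @ (k, centered a) # u') + smU (\<phi> a) (p (u @ u'))"
    by (simp add: p_def distrib_left distrib_right mult.assoc
        flip: smU_mult_left[of _ 1, simplified] smU_mult_right)
  finally have "\<psi> (p (u @ (k, a) # u')) =
      \<phi> a * \<psi> (p (u @ u')) + \<psi> (p (u @ (k, centered a) # u'))"
    by (simp add: psi_add psi_smult)
  then show ?thesis
    by (simp only: moment_def p_def)
qed

lemma moment_alternating_centered:
  "w \<noteq> [] \<Longrightarrow> alternating_centered w \<Longrightarrow> moment w = 0"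
  using free_exch_system
  unfolding free_exch_system_def moment_def alternating_centered_def by blast

lemma word_cases:
  obtains (repeated) u k a b u' where "w = u @ (k, a) # (k, b) # u'"
    | (noncentered) u k a u' where "w = u @ (k, a) # u'" "\<phi> a \<noteq> 0"
    | (reduced) "alternating_centered w"
proof (cases "successively (\<lambda>p q. fst p \<noteq> fst q) w")
  case False
  then obtain u x y u' where "w = u @ x # y # u'" "fst x = fst y"
    using not_successively_split by blast
  then show thesis
    using repeated by (cases x; cases y) auto
next
  case True
  show thesis
  proof (cases "\<forall>(k, a) \<in> set w. \<phi> a = 0")
    case False
    then obtain k a where "(k, a) \<in> set w" "\<phi> a \<noteq> 0"
      by blast
    moreover from split_list[OF this(1)] obtain u u' where "w = u @ (k, a) # u'"
      by blast
    ultimately show thesis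
      using noncentered by blast
  qed (use True reduced in \<open>simp add: alternating_centered_def\<close>)
qed

lemma word_reduction_induct [case_names merge split alternating]:
  assumes merge: "\<And>u k a b u'. Q (u @ (k, a * b) # u') \<Longrightarrow> Q (u @ (k, a) # (k, b) # u')"
    and split: "\<And>u k a u'. \<phi> a \<noteq> 0 \<Longrightarrow> Q (u @ u') \<Longrightarrow> Q (u @ (k, centered a) # u')
                   \<Longrightarrow> Q (u @ (k, a) # u')"
    and alternating: "\<And>w. alternating_centered w \<Longrightarrow> Q w"
  shows "Q w"
proof (induction "length w ^ 2 + length (filter (\<lambda>(k, a). \<phi> a \<noteq> 0) w)"
    arbitrary: w rule: less_induct)
  case less
  \<comment> \<open>merging shortens the word; splitting either shortens it or centers one more letter\<close>
  have shorter: "Q v" if "length w = Suc (length v)" for v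
  proof (rule less)
    have "length (filter (\<lambda>(k, a). \<phi> a \<noteq> 0) v) \<le> length v"
      by simp
    with that show "length v ^ 2 + length (filter (\<lambda>(k, a). \<phi> a \<noteq> 0) v)
        < length w ^ 2 + length (filter (\<lambda>(k, a). \<phi> a \<noteq> 0) w)"
      by (simp add: power2_eq_square del: length_filter_le)
  qed
  show ?case
  proof (cases w rule: word_cases)
    case (repeated u k a b u')
    have "Q (u @ (k, a * b) # u')"
      by (rule shorter) (simp add: repeated)
    then show ?thesis
      unfolding repeated by (rule merge)
  next
    case (noncentered u k a u')
    have "Q (u @ (k, centered a) # u')"
      by (rule less) (use noncentered in \<open>simp add: phi_centered\<close>)
    moreover have "Q (u @ u')"
      by (rule shorter) (simp add: noncentered)
    ultimately show ?thesis
      unfolding noncentered(1) using noncentered(2) split by blast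
  next
    case reduced
    then show ?thesis
      by (rule alternating)
  qed
qed

lemma indices_simps [simp]:
  "indices [] = {}"
  "indices (x # w) = insert (fst x) (indices w)"
  "indices (u @ v) = indices u \<union> indices v"
  by (auto simp: indices_def)

lemma alternating_centered_append:
  assumes "alternating_centered u" "alternating_centered v"
    and "u = [] \<or> v = [] \<or> fst (last u) \<noteq> fst (hd v)"
  shows "alternating_centered (u @ v)"
  using assms unfolding alternating_centered_def successively_append_iff by fastforce

lemma alternating_centered_append_disjoint:
  assumes "alternating_centered u" "alternating_centered v" "indices u \<inter> indices v = {}"
  shows "alternating_centered (u @ v)"
proof (rule alternating_centered_append[OF assms(1,2)])
  show "u = [] \<or> v = [] \<or> fst (last u) \<noteq> fst (hd v)"
  proof (cases "u = [] \<or> v = []")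
    case False
    then have "fst (last u) \<in> indices u" "fst (hd v) \<in> indices v"
      by (simp_all add: indices_def)
    then show ?thesis
      using assms(3) by auto
  qed blast
qed

lemma moment_alternating_centered_insert_right:
  assumes "alternating_centered u" "alternating_centered v" "v \<noteq> []"
    and "indices v \<inter> (indices u \<union> indices u') = {}"
  shows "moment (u @ v @ u') = 0"
  using assms(4)
proof (induction u' rule: word_reduction_induct)
  case (merge u0 k a b u1)
  have "moment (u @ v @ u0 @ (k, a * b) # u1) = 0"
    using merge.prems by (intro merge.IH) simp
  then show ?case
    using moment_merge[of "u @ v @ u0" k a b u1] by simp
next
  case (split u0 k a u1)
  have "moment (u @ v @ u0 @ u1) = 0"
    using split.prems by (intro split.IH(1)) simp
  moreover have "moment (u @ v @ u0 @ (k, centered a) # u1) = 0"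
    using split.prems by (intro split.IH(2)) simp
  moreover have "moment (u @ v @ u0 @ (k, a) # u1) =
      \<phi> a * moment (u @ v @ u0 @ u1) + moment (u @ v @ u0 @ (k, centered a) # u1)"
    using moment_split[of "u @ v @ u0" k a u1] by (simp only: append_assoc)
  ultimately show ?case
    by (simp only: mult_zero_right add_0 append_assoc)
next
  case (alternating w)
  have "indices u \<inter> indices v = {}"
    using assms(4) by auto
  then have "alternating_centered (u @ v)"
    by (rule alternating_centered_append_disjoint[OF assms(1,2)])
  moreover have "fst (last (u @ v)) \<noteq> fst (hd w)" if "w \<noteq> []"
  proof -
    have "last (u @ v) \<in> set v" "hd w \<in> set w"
      using \<open>v \<noteq> []\<close> that by simp_all
    then have "fst (last (u @ v)) \<in> indices v" "fst (hd w) \<in> indices w"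
      unfolding indices_def by simp_all
    then show ?thesis
      using alternating(2) by auto
  qed
  ultimately have "alternating_centered ((u @ v) @ w)"
    using alternating(1) alternating_centered_append[of "u @ v" w] by blast
  then show ?case
    using moment_alternating_centered[of "u @ v @ w"] \<open>v \<noteq> []\<close> by simp
qed

lemma moment_alternating_centered_insert:
  assumes "alternating_centered v" "v \<noteq> []"
    and "indices v \<inter> (indices u \<union> indices u') = {}"
  shows "moment (u @ v @ u') = 0"
  using assms(3)
proof (induction u arbitrary: u' rule: word_reduction_induct)
  case (merge u0 k a b u1)
  have "moment (u0 @ (k, a * b) # u1 @ v @ u') = 0"
    using merge.prems by (intro merge.IH[simplified]) simp
  then show ?case
    using moment_merge[of u0 k a b "u1 @ v @ u'"] by simp
next
  case (split u0 k a u1)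
  have "moment (u0 @ u1 @ v @ u') = 0"
    using split.prems by (intro split.IH(1)[simplified]) simp
  moreover have "moment (u0 @ (k, centered a) # u1 @ v @ u') = 0"
    using split.prems by (intro split.IH(2)[simplified]) simp
  ultimately show ?case
    using moment_split[of u0 k a "u1 @ v @ u'"] by simp
next
  case (alternating w)
  then show ?case
    using moment_alternating_centered_insert_right[OF alternating(1) assms(1,2)] by blast
qed

lemma moment_insert_free:
  assumes "indices v \<inter> indices (u @ u') = {}"
  shows "moment (u @ v @ u') = moment v * moment (u @ u')"
  using assms
proof (induction v arbitrary: u u' rule: word_reduction_induct)
  case (merge v0 k a b v1)
  have "moment (u @ (v0 @ (k, a * b) # v1) @ u') = moment (v0 @ (k, a * b) # v1) * moment (u @ u')"
    using merge.prems by (intro merge.IH) simp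
  then show ?case
    using moment_merge[of "u @ v0" k a b "v1 @ u'"] moment_merge[of v0 k a b v1] by simp
next
  case (split v0 k a v1)
  have "moment (u @ (v0 @ (k, a) # v1) @ u') =
      \<phi> a * moment (u @ (v0 @ v1) @ u') + moment (u @ (v0 @ (k, centered a) # v1) @ u')"
    using moment_split[of "u @ v0" k a "v1 @ u'"] by simp
  also have "\<dots> = (\<phi> a * moment (v0 @ v1) + moment (v0 @ (k, centered a) # v1)) * moment (u @ u')"
  proof -
    have "moment (u @ (v0 @ v1) @ u') = moment (v0 @ v1) * moment (u @ u')"
      by (rule split.IH(1)) (use split.prems in auto)
    moreover have "moment (u @ (v0 @ (k, centered a) # v1) @ u') =
        moment (v0 @ (k, centered a) # v1) * moment (u @ u')"
      by (rule split.IH(2)) (use split.prems in auto)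
    ultimately show ?thesis
      by (simp add: distrib_right)
  qed
  also have "\<dots> = moment (v0 @ (k, a) # v1) * moment (u @ u')"
    using moment_split[of v0 k a v1] by simp
  finally show ?case .
next
  case (alternating v)
  then show ?case
  proof (cases "v = []")
    case False
    then show ?thesis
      using moment_alternating_centered_insert[OF alternating(1) False] alternating(2)
        moment_alternating_centered[OF False alternating(1)] by simp
  qed simp
qed

lemma moment_relabel:
  assumes "inj_on r (indices w)"
  shows "moment (map (apfst r) w) = moment w"
  using assms
proof (induction w rule: word_reduction_induct)
  case (merge u k a b u')
  have "moment (map (apfst r) (u @ (k, a * b) # u')) = moment (u @ (k, a * b) # u')"
    using merge.prems by (intro merge.IH) simp
  then show ?case
    using moment_merge[of "map (apfst r) u" "r k" a b "map (apfst r) u'"] moment_merge[of u k a b u']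
    by simp
next
  case (split u k a u')
  have "moment (map (apfst r) (u @ u')) = moment (u @ u')"
    using split.prems by (intro split.IH(1)) (auto intro: inj_on_subset)
  moreover have "moment (map (apfst r) (u @ (k, centered a) # u')) = moment (u @ (k, centered a) # u')"
    using split.prems by (intro split.IH(2)) (auto intro: inj_on_subset)
  ultimately show ?case
    using moment_split[of "map (apfst r) u" "r k" a "map (apfst r) u'"]
      moment_split[of u k a u'] by simp
next
  case (alternating w)
  have "successively (\<lambda>p q. fst p \<noteq> fst q) w"
    using alternating(1) by (simp add: alternating_centered_def)
  then have "successively (\<lambda>p q. r (fst p) \<noteq> r (fst q)) w"
    by (rule successively_mono) (use alternating(2) in \<open>auto simp: indices_def dest: inj_onD\<close>)
  then have "alternating_centered (map (apfst r) w)"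
    using alternating(1) by (auto simp: alternating_centered_def successively_map)
  then show ?case
    using alternating(1) moment_alternating_centered by (cases "w = []") auto
qed

lemma moment_single_index:
  assumes "\<And>x. x \<in> set w \<Longrightarrow> fst x = k"
  shows "moment w = \<phi> (prod_list (map snd w))"
proof -
  have "prod_list (map (\<lambda>(k, a). \<iota> k a) w) = prod_list (map (\<iota> k) (map snd w))"
    using assms by (auto intro!: arg_cong[where f = prod_list])
  also have "\<dots> = \<iota> k (prod_list (map snd w))"
    by (induction w) (simp_all add: iota_one iota_mult)
  finally have "prod_list (map (\<lambda>(k, a). \<iota> k a) w) = \<iota> k (prod_list (map snd w))" .
  then show ?thesis
    by (simp add: moment_def psi_iota)
qed



end


definition labelled_word :: "(nat \<Rightarrow> nat) \<Rightarrow> (nat \<Rightarrow> 'a) \<Rightarrow> nat set \<Rightarrow> (nat \<times> 'a) list" where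
  "labelled_word f X B = map (\<lambda>j. (f j, X j)) (sorted_list_of_set B)"

context free_exchangeability
begin

lemma indices_labelled_word: "finite B \<Longrightarrow> indices (labelled_word f X B) = f ` B"
  unfolding labelled_word_def indices_def by (simp add: image_image)

lemma moment_labelled_word_interval:
  assumes "finite A" "B \<subseteq> A" "B \<noteq> {}"
    and "\<And>a. a \<in> A \<Longrightarrow> Min B < a \<Longrightarrow> a < Max B \<Longrightarrow> a \<in> B"
    and "\<And>a b. a \<in> A - B \<Longrightarrow> b \<in> B \<Longrightarrow> f a \<noteq> f b"
  shows "moment (labelled_word f X A) = moment (labelled_word f X B) * moment (labelled_word f X (A - B))"
proof -
  define L where "L = {a \<in> A. a < Min B}"
  define R where "R = {a \<in> A. Max B < a}"
  note split = sorted_list_of_set_interval_split[OF assms(1-4), folded L_def R_def]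
  have word_A: "labelled_word f X A = labelled_word f X L @ labelled_word f X B @ labelled_word f X R"
    by (simp add: labelled_word_def split(1))
  have word_A_B: "labelled_word f X (A - B) = labelled_word f X L @ labelled_word f X R"
    by (simp add: labelled_word_def split(2))
  have "y \<notin> f ` (A - B)" if y: "y \<in> f ` B" for y
  proof
    assume "y \<in> f ` (A - B)"
    then obtain a where "a \<in> A - B" "y = f a"
      by blast
    moreover obtain b where "b \<in> B" "y = f b"
      using y by blast
    ultimately show False
      using assms(5)[of a b] by simp
  qed
  moreover have "finite B"
    using assms(1,2) by (rule finite_subset[rotated])
  ultimately have "indices (labelled_word f X B) \<inter> indices (labelled_word f X (A - B)) = {}"
    using assms(1) by (auto simp: indices_labelled_word)
  then show ?thesis
    unfolding word_A word_A_B by (rule moment_insert_free)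
qed

lemma moment_noncrossing_factor:
  assumes "finite A" "partition_on A \<pi>" "noncrossing \<pi>"
    and "\<And>i j. i \<in> A \<Longrightarrow> j \<in> A \<Longrightarrow> f i = f j \<Longrightarrow> \<exists>B\<in>\<pi>. i \<in> B \<and> j \<in> B"
  shows "moment (labelled_word f X A) = (\<Prod>B\<in>\<pi>. moment (labelled_word f X B))"
  using assms
proof (induction "card \<pi>" arbitrary: A \<pi> rule: less_induct)
  case less
  show ?case
  proof (cases "\<pi> = {}")
    case True
    then have "A = {}"
      using less.prems(2) by (simp add: partition_on_def)
    with True show ?thesis
      by (simp add: labelled_word_def)
  next
    case False
    obtain B where B: "B \<in> \<pi>" and interval: "\<And>a. a \<in> A \<Longrightarrow> Min B < a \<Longrightarrow> a < Max B \<Longrightarrow> a \<in> B"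
      using noncrossing_interval_block[OF less.prems(1-3) False] by blast
    have separated: "f a \<noteq> f b" if a: "a \<in> A - B" and b: "b \<in> B" for a b
    proof
      assume "f a = f b"
      then obtain C where "C \<in> \<pi>" "b \<in> C" "a \<in> C"
        using less.prems(4)[of a b] b a partition_on_block(1)[OF less.prems(2) B] by blast
      then show False
        using partition_on_block_eq[OF less.prems(2) B _ b] a by blast
    qed
    have "moment (labelled_word f X A) =
        moment (labelled_word f X B) * moment (labelled_word f X (A - B))"
      using moment_labelled_word_interval[OF less.prems(1) partition_on_block[OF less.prems(2) B] interval separated] .
    also have "moment (labelled_word f X (A - B)) = (\<Prod>C\<in>\<pi> - {B}. moment (labelled_word f X C))"
    proof (rule less.hyps)
      show "card (\<pi> - {B}) < card \<pi>"
        using B finite_elements[OF less.prems(1,2)] by (rule card_Diff1_less[rotated])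
      show "partition_on (A - B) (\<pi> - {B})"
        using less.prems(2) B by (rule partition_on_Diff_block)
      show "noncrossing (\<pi> - {B})"
        using less.prems(3) by (rule noncrossing_subset) blast
      show "\<exists>C\<in>\<pi> - {B}. i \<in> C \<and> j \<in> C" if "i \<in> A - B" "j \<in> A - B" "f i = f j" for i j
        using less.prems(4)[of i j] that by blast
    qed (use less.prems(1) in simp)
    also have "moment (labelled_word f X B) * \<dots> = (\<Prod>C\<in>\<pi>. moment (labelled_word f X C))"
      using prod.remove[OF finite_elements[OF less.prems(1,2)] B, of "\<lambda>C. moment (labelled_word f X C)"]
      by simp
    finally show ?thesis .
  qed
qed

lemma moment_labelled_word_const:
  assumes "\<And>j. j \<in> B \<Longrightarrow> f j = k"
  shows "moment (labelled_word f X B) = \<phi> (ord_prod X B)"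
proof (rule moment_single_index[THEN trans])
  show "fst x = k" if "x \<in> set (labelled_word f X B)" for x
    using that assms by (cases "finite B") (auto simp: labelled_word_def)
qed (simp add: labelled_word_def ord_prod_def comp_def)

lemma phiF_eq_moment: "phiF \<iota> \<psi> n \<sigma> X = moment (labelled_word (block_index \<sigma>) X {1..n})"
  unfolding phiF_def moment_def labelled_word_def sorted_list_of_set_atLeast1AtMost
  by (simp add: comp_def del: upt_Suc)

lemma phiF_noncrossing:
  assumes "\<pi> \<in> NC n"
  shows "phiF \<iota> \<psi> n \<pi> X = (\<Prod>B\<in>\<pi>. \<phi> (ord_prod X B))"
proof -
  have \<pi>: "partition_on {1..n} \<pi>" "noncrossing \<pi>"
    using assms by (auto simp: NC_def set_partitions_def)
  have "phiF \<iota> \<psi> n \<pi> X = (\<Prod>B\<in>\<pi>. moment (labelled_word (block_index \<pi>) X B))"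
    unfolding phiF_eq_moment
    by (rule moment_noncrossing_factor[OF _ \<pi>])
      (simp_all add: block_index_eq_imp_same_block[OF \<pi>(1) finite_atLeastAtMost])
  also have "\<dots> = (\<Prod>B\<in>\<pi>. \<phi> (ord_prod X B))"
  proof (rule prod.cong[OF refl])
    fix B
    assume B: "B \<in> \<pi>"
    have "finite B"
      using partition_on_block_finite[OF \<pi>(1) finite_atLeastAtMost B] .
    then show "moment (labelled_word (block_index \<pi>) X B) = \<phi> (ord_prod X B)"
      using block_index_eq_Min[OF \<pi>(1) B] by (intro moment_labelled_word_const)
  qed
  finally show ?thesis .
qed

lemma phiF_refines_noncrossing:
  assumes "\<pi> \<in> NC n" "partition_on {1..n} \<sigma>" "refines \<sigma> \<pi>"
  shows "phiF \<iota> \<psi> n \<sigma> X = (\<Prod>B\<in>\<pi>. moment (labelled_word (block_index (blocks_in \<sigma> B)) X B))"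
proof -
  have \<pi>: "partition_on {1..n} \<pi>" "noncrossing \<pi>"
    using assms by (auto simp: NC_def set_partitions_def)
  have "phiF \<iota> \<psi> n \<sigma> X = (\<Prod>B\<in>\<pi>. moment (labelled_word (block_index \<sigma>) X B))"
    unfolding phiF_eq_moment
  proof (rule moment_noncrossing_factor[OF _ \<pi>])
    fix i j
    assume "i \<in> {1..n}" "j \<in> {1..n}" "block_index \<sigma> i = block_index \<sigma> j"
    then obtain C where "C \<in> \<sigma>" "i \<in> C" "j \<in> C"
      using block_index_eq_imp_same_block[OF assms(2)] by blast
    moreover obtain D where "D \<in> \<pi>" "C \<subseteq> D"
      using assms(3) \<open>C \<in> \<sigma>\<close> by (rule refinesE)
    ultimately show "\<exists>B\<in>\<pi>. i \<in> B \<and> j \<in> B"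
      by blast
  qed simp
  also have "\<dots> = (\<Prod>B\<in>\<pi>. moment (labelled_word (block_index (blocks_in \<sigma> B)) X B))"
  proof (rule prod.cong[OF refl])
    fix B
    assume B: "B \<in> \<pi>"
    have "labelled_word (block_index \<sigma>) X B = labelled_word (block_index (blocks_in \<sigma> B)) X B"
      unfolding labelled_word_def
    proof (rule map_cong[OF refl])
      fix j
      assume "j \<in> set (sorted_list_of_set B)"
      then have "j \<in> B"
        using partition_on_block_finite[OF \<pi>(1) finite_atLeastAtMost B] by simp
      then show "(block_index \<sigma> j, X j) = (block_index (blocks_in \<sigma> B) j, X j)"
        using block_index_blocks_in[OF finite_atLeastAtMost assms(2) \<pi>(1) assms(3) B] by simp
    qed
    then show "moment (labelled_word (block_index \<sigma>) X B) =
        moment (labelled_word (block_index (blocks_in \<sigma> B)) X B)"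
      by simp
  qed
  finally show ?thesis .
qed

lemma moment_map_partition_set_enum:
  assumes "finite B" "partition_on {1..card B} \<rho>"
  shows "moment (labelled_word (block_index (map_partition (set_enum B) \<rho>)) X B) =
    phiF \<iota> \<psi> (card B) \<rho> (restrict_seq X B)"
proof -
  let ?e = "set_enum B" and ?w = "labelled_word (block_index \<rho>) (restrict_seq X B) {1..card B}"
  have e: "bij_betw ?e {1..card B} B" "strict_mono_on {1..card B} ?e"
    using assms(1) by (rule bij_betw_set_enum) (rule strict_mono_on_set_enum)
  have "labelled_word (block_index (map_partition ?e \<rho>)) X B = map (apfst ?e) ?w"
    unfolding labelled_word_def sorted_list_of_set_set_enum[of B] sorted_list_of_set_atLeast1AtMost
    using block_index_map_partition[OF e finite_atLeastAtMost assms(2)]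
    by (simp add: restrict_seq_set_enum del: upt_Suc)
  moreover have "inj_on ?e (indices ?w)"
  proof (rule inj_on_subset[OF bij_betw_imp_inj_on[OF e(1)]])
    show "indices ?w \<subseteq> {1..card B}"
      using block_index_mem[OF assms(2)] by (auto simp: indices_labelled_word)
  qed
  ultimately show ?thesis
    unfolding phiF_eq_moment by (simp add: moment_relabel)
qed

lemma KFm_eq_sum_partitions:
  "KFm \<iota> \<psi> m Y = (\<Sum>\<rho>\<in>{\<rho>. partition_on {1..m} \<rho>}. phiF \<iota> \<psi> m \<rho> Y * of_int (mobius m \<rho> {{1..m}}))"
proof -
  have "{\<sigma> \<in> set_partitions m. refines \<sigma> {{1..m}}} = {\<rho>. partition_on {1..m} \<rho>}"
    using refines_single_block by (auto simp: set_partitions_def)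
  then show ?thesis
    by (simp add: KFm_def KF_def)
qed

text \<open>Transport along the increasing enumeration of B turns the block B into {1..card B}.\<close>

lemma sum_partitions_moment_mobius_on:
  assumes "finite B" "B \<noteq> {}"
  shows "(\<Sum>\<rho>\<in>{\<rho>. partition_on B \<rho>}. moment (labelled_word (block_index \<rho>) X B) * of_int (mobius_on B \<rho> {B}))
    = KFm \<iota> \<psi> (card B) (restrict_seq X B)"
proof -
  define F where "F \<rho> = moment (labelled_word (block_index \<rho>) X B) * of_int (mobius_on B \<rho> {B})" for \<rho>
  have "(\<Sum>\<rho>\<in>{\<rho>. partition_on B \<rho>}. F \<rho>) =
      (\<Sum>\<rho>\<in>{\<rho>. partition_on {1..card B} \<rho>}. F (map_partition (set_enum B) \<rho>))"
    using sum.reindex_bij_betw[OF bij_betw_map_partition[OF bij_betw_set_enum[OF assms(1)]], of F] by simp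
  also have "\<dots> = (\<Sum>\<rho>\<in>{\<rho>. partition_on {1..card B} \<rho>}.
      phiF \<iota> \<psi> (card B) \<rho> (restrict_seq X B) * of_int (mobius (card B) \<rho> {{1..card B}}))"
    unfolding F_def using moment_map_partition_set_enum[OF assms(1)] mobius_on_map_partition_set_enum[OF assms]
    by (intro sum.cong) auto
  finally show ?thesis
    unfolding F_def KFm_eq_sum_partitions .
qed

lemma KF_noncrossing:
  assumes "\<pi> \<in> NC n"
  shows "KF \<iota> \<psi> n \<pi> X = (\<Prod>B\<in>\<pi>. KFm \<iota> \<psi> (card B) (restrict_seq X B))"
proof -
  define \<delta> where "\<delta> = (\<lambda>x. {x}) ` {1..n}"
  define F where "F B \<rho> = moment (labelled_word (block_index \<rho>) X B) * of_int (mobius_on B \<rho> {B})" for B \<rho>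
  have \<pi>: "partition_on {1..n} \<pi>"
    using assms by (simp add: NC_def set_partitions_def)
  have \<delta>: "partition_on {1..n} \<delta>" "refines \<delta> \<pi>"
    unfolding \<delta>_def using partition_on_singletons singletons_refines[OF \<pi>] .
  have "{\<sigma> \<in> set_partitions n. refines \<sigma> \<pi>} = partitions_between {1..n} \<delta> \<pi>"
    using singletons_refines unfolding \<delta>_def by (auto simp: set_partitions_def partitions_between_def)
  then have "KF \<iota> \<psi> n \<pi> X = (\<Sum>\<sigma>\<in>partitions_between {1..n} \<delta> \<pi>. phiF \<iota> \<psi> n \<sigma> X * of_int (mobius n \<sigma> \<pi>))"
    by (simp add: KF_def)
  also have "\<dots> = (\<Sum>\<sigma>\<in>partitions_between {1..n} \<delta> \<pi>. \<Prod>B\<in>\<pi>. F B (blocks_in \<sigma> B))"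
  proof (rule sum.cong[OF refl])
    fix \<sigma>
    assume "\<sigma> \<in> partitions_between {1..n} \<delta> \<pi>"
    then have \<sigma>: "partition_on {1..n} \<sigma>" "refines \<sigma> \<pi>"
      by (auto simp: partitions_between_def)
    show "phiF \<iota> \<psi> n \<sigma> X * of_int (mobius n \<sigma> \<pi>) = (\<Prod>B\<in>\<pi>. F B (blocks_in \<sigma> B))"
      using phiF_refines_noncrossing[OF assms \<sigma>] mobius_on_factor[OF _ \<sigma>(1) \<pi> \<sigma>(2)]
      by (simp add: F_def mobius_eq_mobius_on prod.distrib)
  qed
  also have "\<dots> = (\<Prod>B\<in>\<pi>. \<Sum>\<rho>\<in>partitions_between B (blocks_in \<delta> B) {B}. F B \<rho>)"
    using finite_atLeastAtMost \<delta>(1) \<pi> \<delta>(2) by (rule sum_partitions_between_factor)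
  also have "\<dots> = (\<Prod>B\<in>\<pi>. KFm \<iota> \<psi> (card B) (restrict_seq X B))"
  proof (rule prod.cong[OF refl])
    fix B
    assume B: "B \<in> \<pi>"
    then show "(\<Sum>\<rho>\<in>partitions_between B (blocks_in \<delta> B) {B}. F B \<rho>) = KFm \<iota> \<psi> (card B) (restrict_seq X B)"
      unfolding \<delta>_def F_def
      using partitions_between_singletons[OF partition_on_block(1)[OF \<pi> B]]
        sum_partitions_moment_mobius_on[OF partition_on_block_finite[OF \<pi> _ B] partition_on_block(2)[OF \<pi> B]]
      by simp
  qed
  finally show ?thesis .
qed

end

theorem proposition4p3:
  fixes smA :: "complex \<Rightarrow> 'a::ring_1 \<Rightarrow> 'a"
    and \<phi> :: "'a \<Rightarrow> complex"
    and smU :: "complex \<Rightarrow> 'u::ring_1 \<Rightarrow> 'u"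
    and \<iota> :: "nat \<Rightarrow> 'a \<Rightarrow> 'u"
    and \<psi> :: "'u \<Rightarrow> complex"
    and n :: nat and \<pi> :: "nat set set" and X :: "nat \<Rightarrow> 'a"
  assumes "nc_prob_space smA \<phi>"
    and "free_exch_system smA \<phi> smU \<iota> \<psi>"
    and "\<pi> \<in> NC n"
  shows "phiF \<iota> \<psi> n \<pi> X = (\<Prod>B\<in>\<pi>. \<phi> (ord_prod X B))
     \<and> KF \<iota> \<psi> n \<pi> X = (\<Prod>B\<in>\<pi>. KFm \<iota> \<psi> (card B) (restrict_seq X B))"
proof -
  interpret free_exchangeability smA \<phi> smU \<iota> \<psi>
    using assms(1,2) by unfold_locales
  show ?thesis
    using phiF_noncrossing[OF assms(3)] KF_noncrossing[OF assms(3)] by simp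
qed

end
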